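(* Let $n = p_1^{\alpha_1} \cdots p_r^{\alpha_r}$ be the prime factorisation of a positive integer $n$ (distinct primes $p_i$, $\alpha_i>0$). Then \[|\det(A_n)| = \prod_{i=1}^r p_i^{\frac{n(1-p_i^{-\alpha_i})}{p_i-1}}.\]
   Context: For a positive integer $k$, let $\Phi_d$ denote the $d$th cyclotomic polynomial and let $\Psi_k : \mathbf{Z}[X]/(X^k-1) \to \bigoplus_{d \mid k} \mathbf{Z}[X]/(\Phi_d(X))$ be the natural map $f \bmod (X^k-1) \mapsto \bigoplus_{d\mid k} f \bmod \Phi_d(X)$. Endow $\mathbf{Z}[X]/(X^k-1)$ with the basis $(1, \overline{X}, \dots, \overline{X}^{k-1})$, each $\mathbf{Z}[X]/(\Phi_d(X))$ with the basis $(1, \overline{X}, \dots, \overline{X}^{\phi(d)-1})$, and order the summands by increasing $d$. $A_k$ is the $k\times k$ integer matrix of $\Psi_k$ with respect to these bases. *)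

theory Defs
  imports Complex_Main "HOL-Computational_Algebra.Polynomial" "HOL-Computational_Algebra.Primes"
    "HOL-Number_Theory.Totient" "Jordan_Normal_Form.Determinant"
begin

definition cyclotomic_complex :: "nat \<Rightarrow> complex poly" where
  "cyclotomic_complex d =
     (\<Prod>j\<in>{j\<in>{1..d}. coprime j d}. [:- cis (2 * pi * real j / real d), 1:])"

text \<open>The d-th cyclotomic polynomial as an integer polynomial (it has integer coefficients).\<close>
definition cyclotomic :: "nat \<Rightarrow> int poly" where
  "cyclotomic d = (THE p. map_poly of_int p = cyclotomic_complex d)"

text \<open>Row labels of A_k: the summands Z[X]/(Phi_d), d | k in increasing order,
  each contributing rows for the basis 1, X, ..., X^(phi(d)-1).\<close>
definition row_labels :: "nat \<Rightarrow> (nat \<times> nat) list" where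
  "row_labels k = concat (map (\<lambda>d. map (\<lambda>i. (d, i)) [0..<totient d])
                            (sorted_list_of_set {d. d dvd k}))"

text \<open>The matrix A_k: column j is the image of X^j; the entry in row (d,i) is the
  coefficient of X^i in X^j mod Phi_d (Phi_d is monic, so pseudo-division is
  ordinary division with remainder).\<close>
definition A_mat :: "nat \<Rightarrow> int mat" where
  "A_mat k = mat k k (\<lambda>(r, j). case row_labels k ! r of (d, i) \<Rightarrow>
                 coeff (pseudo_mod (monom 1 j) (cyclotomic d)) i)"

end

theory Submission
  imports Defs "Jordan_Normal_Form.Char_Poly"
begin

text \<open>
  Index the n-th roots of unity by the row labels (d, k) of A_n, (d, k) standing for the k-th
  primitive d-th root. Reducing X^j modulo Phi_d and evaluating at the primitive d-th roots
  shows B A_n = V, where V is the Vandermonde matrix of all n-th roots of unity and B is block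
  diagonal with the Vandermonde matrices of the primitive d-th roots as blocks. After taking
  squared absolute values every Vandermonde determinant becomes a product of |z - w| over ordered
  pairs of distinct roots; the pairs of equal order cancel against B, so |det A_n|^2 = F(n), the
  product over ordered pairs of n-th roots of unity of different orders (mixed_order_prod n).

  For n = p^a m with p not dividing m, split the n-th roots into the (p^(a-1) m)-th roots and
  the new ones. For an old root z the product of |z - w| over the new roots w is
  n / (p^(a-1) m) = p, since the product over all n-th roots w \<noteq> z is n. The new roots are
  exactly the products x r of an m-th root x with a primitive p^a-th root r, which turns the
  new-new pairs into a power of F(m). Hence
  F(p^a m) = F(p^(a-1) m) p^(2 p^(a-1) m) F(m)^(p^a - p^(a-1)), a recursion solved by
  F(n) = (prod_p p^e_p)^2 with e_p = (n / p^a) (1 + p + ... + p^(a-1)) = n (1 - p^-a) / (p - 1).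
\<close>

section \<open>Roots of unity\<close>

definition unity_roots :: "nat \<Rightarrow> complex set" where "unity_roots k = {z. z ^ k = 1}"

lemma finite_unity_roots: "n > 0 \<Longrightarrow> finite (unity_roots n)"
  unfolding unity_roots_def by (rule finite_nth_roots)

lemma card_unity_roots: "n > 0 \<Longrightarrow> card (unity_roots n) = n"
  unfolding unity_roots_def by (rule card_roots_unity_eq)

lemma unity_root_nonzero: "z \<in> unity_roots n \<Longrightarrow> n > 0 \<Longrightarrow> z \<noteq> 0"
  unfolding unity_roots_def by (auto simp: power_0_left)

lemma unity_roots_dvd_mono: "d dvd n \<Longrightarrow> unity_roots d \<subseteq> unity_roots n"
  unfolding unity_roots_def by (auto elim!: dvdE simp: power_mult)

lemma card_unity_roots_diff:
  assumes "k > 0" "q > 0" "k dvd q"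
  shows "card (unity_roots q - unity_roots k) = q - k"
  using assms unity_roots_dvd_mono[OF assms(3)]
  by (simp add: card_Diff_subset finite_unity_roots card_unity_roots)

lemma power_gcd_eq_1:
  fixes z :: complex
  assumes "z ^ a = 1" "z ^ b = 1" shows "z ^ gcd a b = 1"
proof (cases "a = 0")
  case True then show ?thesis using assms by simp
next
  case False
  obtain x y where xy: "a * x = b * y + gcd a b" using bezout_nat[OF False] by blast
  have "z ^ (a * x) = 1" using assms by (simp add: power_mult)
  moreover have "z ^ (a*x) = z ^ (b*y) * z ^ gcd a b" by (simp add: xy power_add)
  moreover have "z ^ (b * y) = 1" using assms by (simp add: power_mult)
  ultimately show ?thesis by simp
qed

lemma prod_linear_factors_dvd:
  fixes q :: "complex poly"
  assumes "finite S" "\<forall>s\<in>S. poly q s = 0"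
  shows "(\<Prod>s\<in>S. [:-s,1:]) dvd q"
  using assms
proof (induction S rule: finite_induct)
  case empty then show ?case by simp
next
  case (insert a S)
  then obtain r where r: "q = (\<Prod>s\<in>S. [:-s,1:]) * r" by (auto elim: dvdE)
  have "poly q a = 0" using insert by auto
  moreover have "poly (\<Prod>s\<in>S. [:-s,1:]) a \<noteq> 0"
    using insert(1,2) by (auto simp: poly_prod)
  ultimately have "poly r a = 0" using r by simp
  then have "[:-a,1:] dvd r" by (simp add: poly_eq_0_iff_dvd)
  then have "[:-a,1:] * (\<Prod>s\<in>S. [:-s,1:]) dvd r * (\<Prod>s\<in>S. [:-s,1:])"
    by (rule mult_dvd_mono) simp
  then show ?case using insert(1,2) r by (simp add: mult.commute)
qed

lemma monic_dvd_eq_same_degree: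
  fixes p q :: "complex poly"
  assumes "p dvd q" "degree p = degree q" "lead_coeff p = 1" "lead_coeff q = 1"
  shows "p = q"
proof -
  obtain c where c: "q = p * c" using assms(1) by (auto elim: dvdE)
  have q0: "q \<noteq> 0" using assms(4) by auto
  then have "p \<noteq> 0" "c \<noteq> 0" using c by auto
  then have "degree q = degree p + degree c" using c by (simp add: degree_mult_eq)
  then have "degree c = 0" using assms(2) by simp
  then obtain c0 where "c = [:c0:]" by (metis degree_eq_zeroE)
  moreover have "lead_coeff q = lead_coeff p * lead_coeff c" using c by (simp add: lead_coeff_mult)
  ultimately have "c = 1" using assms by (simp add: one_pCons)
  then show ?thesis using c by simp
qed

lemma monom_minus_1_monic:
  assumes "n > 0"
  shows "degree (monom (1::complex) n - 1) = n" "lead_coeff (monom (1::complex) n - 1) = 1"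
proof -
  have e: "monom (1::complex) n - 1 = monom 1 n + [:-1:]" by (simp add: one_pCons)
  have "degree (monom (1::complex) n + [:-1:]) = degree (monom (1::complex) n)"
    using assms by (intro degree_add_eq_left) (simp add: degree_monom_eq)
  then show d: "degree (monom (1::complex) n - 1) = n" unfolding e by (simp add: degree_monom_eq)
  show "lead_coeff (monom (1::complex) n - 1) = 1" using assms by (simp add: d coeff_diff coeff_monom)
qed

lemma prod_unity_roots_linear_factors:
  assumes "n > 0"
  shows "(\<Prod>\<eta>\<in>unity_roots n. [:-\<eta>,1:]) = monom 1 n - 1"
proof (rule monic_dvd_eq_same_degree)
  show "(\<Prod>\<eta>\<in>unity_roots n. [:-\<eta>,1:]) dvd monom 1 n - 1"
    using assms by (intro prod_linear_factors_dvd finite_unity_roots) (auto simp: unity_roots_def poly_monom)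
  have "degree (\<Prod>\<eta>\<in>unity_roots n. [:-\<eta>,1:]) = (\<Sum>\<eta>\<in>unity_roots n. degree [:-\<eta>,(1::complex):])"
    by (rule degree_prod_eq_sum_degree) auto
  also have "\<dots> = n" using card_unity_roots[OF assms] by simp
  finally show "degree (\<Prod>\<eta>\<in>unity_roots n. [:-\<eta>,1:]) = degree (monom (1::complex) n - 1)"
    using assms by (simp add: monom_minus_1_monic)
  show "lead_coeff (\<Prod>\<eta>\<in>unity_roots n. [:-\<eta>,1:]) = 1" by (simp add: lead_coeff_prod)
  show "lead_coeff (monom (1::complex) n - 1) = 1"
    using assms by (simp add: monom_minus_1_monic)
qed

lemma prod_unity_roots_diff: "n > 0 \<Longrightarrow> (\<Prod>\<eta>\<in>unity_roots n. x - \<eta>) = x ^ n - 1"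
proof -
  assume n: "n > 0"
  have "poly (\<Prod>\<eta>\<in>unity_roots n. [:-\<eta>,1:]) x = poly (monom 1 n - 1) x" using prod_unity_roots_linear_factors[OF n] by simp
  then show ?thesis by (simp add: poly_prod poly_monom)
qed

lemma prod_unity_roots_scaled_diff:
  assumes "n > 0"
  shows "(\<Prod>\<eta>\<in>unity_roots n. x - c * \<eta>) = x ^ n - c ^ n"
proof (cases "c = 0")
  case True then show ?thesis using card_unity_roots[OF assms] assms by simp
next
  case False
  have "(\<Prod>\<eta>\<in>unity_roots n. x - c * \<eta>) = (\<Prod>\<eta>\<in>unity_roots n. c * (x / c - \<eta>))"
    using False by (intro prod.cong) (auto simp: field_simps)
  also have "\<dots> = c ^ n * (\<Prod>\<eta>\<in>unity_roots n. (x / c - \<eta>))"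
    by (simp add: prod.distrib card_unity_roots[OF assms])
  also have "\<dots> = c ^ n * ((x/c)^n - 1)" by (simp add: prod_unity_roots_diff[OF assms])
  also have "\<dots> = x ^ n - c ^ n" using False by (simp add: field_simps power_divide)
  finally show ?thesis .
qed

lemma prod_norm_unity_roots_scaled_diff:
  assumes "n > 0"
  shows "(\<Prod>\<eta>\<in>unity_roots n. cmod (x - c * \<eta>)) = cmod (x ^ n - c ^ n)"
proof -
  have "(\<Prod>\<eta>\<in>unity_roots n. cmod (x - c * \<eta>)) = cmod (\<Prod>\<eta>\<in>unity_roots n. x - c * \<eta>)"
    by (rule prod_norm)
  then show ?thesis by (simp add: prod_unity_roots_scaled_diff[OF assms])
qed

lemma norm_unity_root: "z \<in> unity_roots n \<Longrightarrow> n > 0 \<Longrightarrow> cmod z = 1"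
proof -
  assume "z \<in> unity_roots n" "n > 0"
  then have "cmod z ^ n = 1 ^ n" by (simp add: unity_roots_def norm_power[symmetric])
  then show ?thesis using \<open>n > 0\<close> power_eq_imp_eq_base[of "cmod z" n 1] by simp
qed

lemma prod_norm_diff_other_unity_roots:
  assumes n: "n > 0" and z: "\<zeta> \<in> unity_roots n"
  shows "(\<Prod>\<eta>\<in>unity_roots n - {\<zeta>}. cmod (\<zeta> - \<eta>)) = n"
proof -
  define P' where "P' = (\<Prod>\<eta>\<in>unity_roots n - {\<zeta>}. [:-\<eta>,1:])"
  define S where "S = (\<Sum>i<n. [:\<zeta>:] ^ (n - Suc i) * [:0,1:] ^ i)"
  have "[:-\<zeta>,1:] * P' = (\<Prod>\<eta>\<in>unity_roots n. [:-\<eta>,1:])"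
    unfolding P'_def using finite_unity_roots[OF n] z by (simp add: prod.remove)
  also have "\<dots> = monom 1 n - 1" by (rule prod_unity_roots_linear_factors[OF n])
  also have "\<dots> = [:0,1:] ^ n - [:\<zeta>:] ^ n"
    using z by (simp add: unity_roots_def monom_altdef poly_const_pow one_pCons)
  also have "\<dots> = ([:0,1:] - [:\<zeta>:]) * S" unfolding S_def by (rule power_diff_sumr2)
  also have "[:0,1:] - [:\<zeta>:] = [:-\<zeta>,1:]" by simp
  finally have "[:-\<zeta>,1:] * P' = [:-\<zeta>,1:] * S" .
  then have "P' = S" by (subst (asm) mult_left_cancel) auto
  then have "poly P' \<zeta> = poly S \<zeta>" by simp
  also have "\<dots> = (\<Sum>i<n. \<zeta> ^ (n - 1))"
    unfolding S_def by (simp add: poly_sum poly_power power_add[symmetric])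
  also have "\<dots> = of_nat n * \<zeta> ^ (n - 1)" by simp
  finally have "poly P' \<zeta> = of_nat n * \<zeta> ^ (n - 1)" .
  moreover have "poly P' \<zeta> = (\<Prod>\<eta>\<in>unity_roots n - {\<zeta>}. \<zeta> - \<eta>)" unfolding P'_def by (simp add: poly_prod)
  ultimately have "cmod (\<Prod>\<eta>\<in>unity_roots n - {\<zeta>}. \<zeta> - \<eta>) = n"
    using norm_unity_root[OF z n] by (simp add: norm_mult norm_power)
  then show ?thesis by (simp add: prod_norm)
qed

lemma prod_unity_roots_power_fibres:
  fixes f :: "complex \<Rightarrow> real"
  assumes q: "q = k * p" and k: "k > 0" and p: "p > 0"
  shows "(\<Prod>\<rho>\<in>unity_roots q. f (\<rho> ^ k)) = (\<Prod>\<sigma>\<in>unity_roots p. f \<sigma> ^ k)"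
proof -
  have q0: "q > 0" using q k p by simp
  have "(\<Prod>\<rho>\<in>unity_roots q. f (\<rho> ^ k)) = (\<Prod>\<sigma>\<in>unity_roots p. \<Prod>\<rho>\<in>{\<rho>. \<rho> \<in> unity_roots q \<and> \<rho> ^ k = \<sigma>}. f (\<rho> ^ k))"
    by (rule prod.group[symmetric], rule finite_unity_roots[OF q0], rule finite_unity_roots[OF p])
      (auto simp: unity_roots_def q power_mult)
  also have "\<dots> = (\<Prod>\<sigma>\<in>unity_roots p. f \<sigma> ^ k)"
  proof (rule prod.cong[OF refl])
    fix \<sigma> assume s: "\<sigma> \<in> unity_roots p"
    have e: "{\<rho>. \<rho> \<in> unity_roots q \<and> \<rho> ^ k = \<sigma>} = {\<rho>. \<rho> ^ k = \<sigma>}"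
      using s by (auto simp: unity_roots_def q power_mult)
    have "\<sigma> \<noteq> 0" using unity_root_nonzero[OF s p] .
    then have "card {\<rho>. \<rho> ^ k = \<sigma>} = k" using k by (rule card_nth_roots)
    then show "(\<Prod>\<rho>\<in>{\<rho>. \<rho> \<in> unity_roots q \<and> \<rho> ^ k = \<sigma>}. f (\<rho> ^ k)) = f \<sigma> ^ k"
      unfolding e by simp
  qed
  finally show ?thesis .
qed

lemma prod_norm_unity_roots_power_diff:
  assumes q: "q = k * p" and k: "k > 0" and p: "p > 0"
  shows "(\<Prod>\<rho>\<in>unity_roots q. cmod (a * \<rho> ^ k - b)) = cmod (a ^ p - b ^ p) ^ k"
proof -
  have "(\<Prod>\<rho>\<in>unity_roots q. cmod (a * \<rho> ^ k - b)) = (\<Prod>\<sigma>\<in>unity_roots p. cmod (a * \<sigma> - b) ^ k)"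
    by (rule prod_unity_roots_power_fibres[OF assms, of "\<lambda>s. cmod (a * s - b)"])
  also have "\<dots> = (\<Prod>\<sigma>\<in>unity_roots p. cmod (b - a * \<sigma>)) ^ k"
    by (simp add: prod_power_distrib norm_minus_commute)
  also have "\<dots> = cmod (a ^ p - b ^ p) ^ k"
    by (simp add: prod_norm_unity_roots_scaled_diff[OF p] norm_minus_commute)
  finally show ?thesis .
qed

section \<open>Pairs of roots of unity of different orders\<close>

definition same_order :: "complex \<Rightarrow> complex \<Rightarrow> bool" where
  "same_order a b \<longleftrightarrow> (\<forall>k. a ^ k = 1 \<longleftrightarrow> b ^ k = 1)"

definition mixed_order_pairs :: "nat \<Rightarrow> (complex \<times> complex) set" where
  "mixed_order_pairs n = {(a,b). a \<in> unity_roots n \<and> b \<in> unity_roots n \<and> \<not> same_order a b}"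

definition mixed_order_prod :: "nat \<Rightarrow> real" where
  "mixed_order_prod n = (\<Prod>x\<in>mixed_order_pairs n. cmod (fst x - snd x))"

lemma finite_mixed_order_pairs: "n > 0 \<Longrightarrow> finite (mixed_order_pairs n)"
  by (rule finite_subset[of _ "unity_roots n \<times> unity_roots n"]) (auto simp: mixed_order_pairs_def finite_unity_roots)

lemma power_dvd_eq_1: "(z::complex) ^ d = 1 \<Longrightarrow> d dvd k \<Longrightarrow> z ^ k = 1"
  by (auto elim!: dvdE simp: power_mult)

lemma power_coprime_factor_eq_1:
  fixes x :: complex
  assumes "coprime c m" "x ^ m = 1" "x ^ (c * k) = 1"
  shows "x ^ k = 1"
proof -
  have "x ^ gcd (c * k) m = 1" using assms by (intro power_gcd_eq_1)
  moreover have "gcd (c * k) m = gcd k m" using assms(1)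
    by (intro gcd_mult_left_left_cancel) (simp add: coprime_commute)
  ultimately have "x ^ gcd k m = 1" by simp
  then show ?thesis by (rule power_dvd_eq_1) simp
qed

lemma power_coprime_power_eq_1_iff:
  assumes "coprime c m" "x \<in> unity_roots m"
  shows "(x ^ c) ^ k = 1 \<longleftrightarrow> x ^ k = 1"
proof
  assume "(x ^ c) ^ k = 1"
  then show "x ^ k = 1"
    using power_coprime_factor_eq_1[OF assms(1), of x k] assms(2) by (simp add: unity_roots_def power_mult)
next
  assume "x ^ k = 1"
  then have "(x ^ k) ^ c = 1" by simp
  then show "(x ^ c) ^ k = 1" by (simp add: power_mult[symmetric] mult.commute)
qed

lemma same_order_power_iff:
  assumes "coprime c m" "x \<in> unity_roots m" "y \<in> unity_roots m"
  shows "same_order (x ^ c) (y ^ c) \<longleftrightarrow> same_order x y"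
  unfolding same_order_def using power_coprime_power_eq_1_iff[OF assms(1)] assms(2,3) by auto

lemma bij_betw_power_unity_roots:
  assumes m: "m > 0" and c: "coprime c m"
  shows "bij_betw (\<lambda>x. x ^ c) (unity_roots m) (unity_roots m)"
proof -
  have inj: "inj_on (\<lambda>x. x ^ c) (unity_roots m)"
  proof (rule inj_onI)
    fix x y assume xy: "x \<in> unity_roots m" "y \<in> unity_roots m" "x ^ c = y ^ c"
    have y0: "y \<noteq> 0" using unity_root_nonzero[OF xy(2) m] .
    have "(x / y) ^ c = 1" "(x / y) ^ m = 1" using xy y0 by (auto simp: power_divide unity_roots_def)
    then have "(x / y) ^ gcd c m = 1" by (rule power_gcd_eq_1)
    then show "x = y" using c y0 by simp
  qed
  have sub: "(\<lambda>x. x ^ c) ` unity_roots m \<subseteq> unity_roots m"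
    using power_coprime_power_eq_1_iff[OF c] by (auto simp: unity_roots_def)
  have "card ((\<lambda>x. x ^ c) ` unity_roots m) = card (unity_roots m)" using inj by (rule card_image)
  then have "(\<lambda>x. x ^ c) ` unity_roots m = unity_roots m"
    using sub finite_unity_roots[OF m] by (intro card_subset_eq) auto
  then show ?thesis using inj by (simp add: bij_betw_def)
qed

lemma bij_betw_power_mixed_order_pairs:
  assumes m: "m > 0" and c: "coprime c m"
  shows "bij_betw (map_prod (\<lambda>x. x ^ c) (\<lambda>x. x ^ c)) (mixed_order_pairs m) (mixed_order_pairs m)"
proof -
  let ?f = "map_prod (\<lambda>x. x ^ c) (\<lambda>x. x ^ c)"
  have b: "bij_betw ?f (unity_roots m \<times> unity_roots m) (unity_roots m \<times> unity_roots m)"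
    using bij_betw_power_unity_roots[OF m c] by (intro bij_betw_map_prod)
  have sub: "mixed_order_pairs m \<subseteq> unity_roots m \<times> unity_roots m"
    by (auto simp: mixed_order_pairs_def)
  have "?f ` mixed_order_pairs m = mixed_order_pairs m"
  proof
    show "?f ` mixed_order_pairs m \<subseteq> mixed_order_pairs m"
      using same_order_power_iff[OF c] bij_betw_apply[OF bij_betw_power_unity_roots[OF m c]]
      by (auto simp: mixed_order_pairs_def)
    show "mixed_order_pairs m \<subseteq> ?f ` mixed_order_pairs m"
    proof
      fix z assume z: "z \<in> mixed_order_pairs m"
      then have "z \<in> ?f ` (unity_roots m \<times> unity_roots m)"
        using b sub by (auto simp: bij_betw_def)
      then obtain x y where xy: "x \<in> unity_roots m" "y \<in> unity_roots m" "z = (x ^ c, y ^ c)" by auto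
      then have "\<not> same_order x y" using z same_order_power_iff[OF c] by (auto simp: mixed_order_pairs_def)
      then show "z \<in> ?f ` mixed_order_pairs m" using xy by (auto simp: mixed_order_pairs_def)
    qed
  qed
  then show ?thesis by (rule bij_betw_subset[OF b sub])
qed

lemma mixed_order_prod_power:
  assumes "m > 0" "coprime c m"
  shows "(\<Prod>x\<in>mixed_order_pairs m. cmod (fst x ^ c - snd x ^ c)) = mixed_order_prod m"
  using prod.reindex_bij_betw[OF bij_betw_power_mixed_order_pairs[OF assms], of "\<lambda>x. cmod (fst x - snd x)"]
  unfolding mixed_order_prod_def by (simp add: case_prod_beta)

lemma mixed_order_pair_neq: "x \<in> mixed_order_pairs m \<Longrightarrow> fst x \<noteq> snd x"
  unfolding mixed_order_pairs_def same_order_def by auto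

lemma mixed_order_prod_pos: "mixed_order_prod m > 0"
  unfolding mixed_order_prod_def by (rule prod_pos) (use mixed_order_pair_neq in auto)

lemma prod_norm_new_root_pairs:
  assumes k: "k > 0" and p: "p > 0" and q: "q = k * p"
  shows "(\<Prod>r\<in>unity_roots q - unity_roots k. \<Prod>r'\<in>unity_roots q - unity_roots k. cmod (x*r - y*r')) * cmod (x^q - y^q)^k =
         cmod (x^q - y^q)^(q - k) * cmod (x^k - y^k)^k"
proof -
  have q0: "q > 0" using k p q by simp
  have sub: "unity_roots k \<subseteq> unity_roots q" using q by (intro unity_roots_dvd_mono) simp
  define P where "P = unity_roots q - unity_roots k"
  have cP: "card P = q - k" unfolding P_def using k q0 q by (intro card_unity_roots_diff) simp_all
  have split: "(\<Prod>r\<in>unity_roots q. g r) = (\<Prod>r\<in>P. g r) * (\<Prod>r\<in>unity_roots k. g r)" for g :: "complex \<Rightarrow> real"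
    unfolding P_def using sub finite_unity_roots[OF q0] by (rule prod.subset_diff)
  define Y where "Y = cmod (x^q - y^q)"
  define Z where "Z = cmod (x^k - y^k)"
  define X where "X = (\<Prod>r\<in>P. cmod (x^k * r^k - y^k))"
  define W where "W = (\<Prod>r\<in>P. \<Prod>r'\<in>P. cmod (x*r - y*r'))"
  txt \<open>Completing the inner product over r' to all q-th roots gives Y for every r, hence
    W X = Y^(q-k); and the product of |x^k r^k - y^k| over all q-th roots r is Y^k, while its
    part over the k-th roots is Z^k, hence X Z^k = Y^k.\<close>
  have A: "(\<Prod>r'\<in>P. cmod (x*r - y*r')) * cmod (x^k * r^k - y^k) = Y" if r: "r \<in> unity_roots q" for r
  proof -
    have "(\<Prod>r'\<in>unity_roots q. cmod (x*r - y*r')) = cmod ((x*r)^q - y^q)" by (rule prod_norm_unity_roots_scaled_diff[OF q0])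
    also have "\<dots> = Y" using r by (simp add: unity_roots_def power_mult_distrib Y_def)
    finally have 1: "(\<Prod>r'\<in>unity_roots q. cmod (x*r - y*r')) = Y" .
    have 2: "(\<Prod>r'\<in>unity_roots k. cmod (x*r - y*r')) = cmod (x^k * r^k - y^k)"
      by (simp add: prod_norm_unity_roots_scaled_diff[OF k] power_mult_distrib)
    show ?thesis using 1 2 split[of "\<lambda>r'. cmod (x*r - y*r')"] by simp
  qed
  have "W * X = (\<Prod>r\<in>P. (\<Prod>r'\<in>P. cmod (x*r - y*r')) * cmod (x^k * r^k - y^k))"
    unfolding W_def X_def by (simp add: prod.distrib)
  also have "\<dots> = (\<Prod>r\<in>P. Y)" using A by (intro prod.cong) (auto simp: P_def)
  also have "\<dots> = Y ^ (q - k)" using cP by simp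
  finally have WX: "W * X = Y ^ (q - k)" .
  have "(\<Prod>r\<in>unity_roots q. cmod (x^k * r^k - y^k)) = cmod ((x^k)^p - (y^k)^p) ^ k"
    by (rule prod_norm_unity_roots_power_diff[OF q k p])
  also have "\<dots> = Y ^ k" by (simp add: Y_def q power_mult)
  finally have B1: "(\<Prod>r\<in>unity_roots q. cmod (x^k * r^k - y^k)) = Y ^ k" .
  have B2: "(\<Prod>r\<in>unity_roots k. cmod (x^k * r^k - y^k)) = Z ^ k"
  proof -
    have "(\<Prod>r\<in>unity_roots k. cmod (x^k * r^k - y^k)) = (\<Prod>r\<in>unity_roots k. Z)"
      by (intro prod.cong) (auto simp: unity_roots_def Z_def)
    then show ?thesis using card_unity_roots[OF k] by simp
  qed
  have XZ: "X * Z ^ k = Y ^ k" using B1 B2 split[of "\<lambda>r. cmod (x^k * r^k - y^k)"]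
    by (simp add: X_def)
  have "W * Y ^ k = Y ^ (q - k) * Z ^ k"
    by (metis WX XZ mult.assoc)
  then show ?thesis by (simp add: W_def P_def Y_def Z_def)
qed

lemma prod_norm_diff_new_unity_roots:
  assumes n': "n' > 0" and p0: "p > 0" and n: "n = n' * p" and z: "z \<in> unity_roots n'"
  shows "(\<Prod>b\<in>unity_roots n - unity_roots n'. cmod (z - b)) = real p"
proof -
  have n0: "n > 0" using n n' p0 by simp
  have sub: "unity_roots n' \<subseteq> unity_roots n" using n by (intro unity_roots_dvd_mono) simp
  have e: "unity_roots n - {z} = (unity_roots n' - {z}) \<union> (unity_roots n - unity_roots n')" using sub z by auto
  have "real n = (\<Prod>b\<in>unity_roots n - {z}. cmod (z - b))" using prod_norm_diff_other_unity_roots[OF n0] z sub by auto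
  also have "\<dots> = (\<Prod>b\<in>unity_roots n' - {z}. cmod (z - b)) * (\<Prod>b\<in>unity_roots n - unity_roots n'. cmod (z - b))"
    unfolding e by (rule prod.union_disjoint) (use finite_unity_roots[OF n'] finite_unity_roots[OF n0] in auto)
  also have "(\<Prod>b\<in>unity_roots n' - {z}. cmod (z - b)) = real n'" using prod_norm_diff_other_unity_roots[OF n' z] .
  finally show ?thesis using n n' by simp
qed

lemma new_prime_power_root_power_eq_1:
  assumes p: "prime p" and a: "a \<ge> 1" and r: "r \<in> unity_roots (p^a) - unity_roots (p^(a-1))"
  shows "r ^ j = 1 \<longleftrightarrow> p^a dvd j"
proof
  assume rj: "r ^ j = 1"
  have rq: "r ^ (p^a) = 1" using r by (simp add: unity_roots_def)
  have g: "r ^ gcd j (p^a) = 1" using power_gcd_eq_1[OF rj rq] .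
  have "gcd j (p^a) dvd p^a" by (rule gcd_dvd2)
  then obtain i where i: "i \<le> a" "gcd j (p^a) = p^i"
    using divides_primepow_nat[OF p] by blast
  have ri: "r ^ (p^i) = 1" using g i(2) by simp
  have "i = a"
  proof (rule ccontr)
    assume "i \<noteq> a"
    then have "i \<le> a - 1" using i(1) by linarith
    then have "p^i dvd p^(a-1)" by (rule le_imp_power_dvd)
    then have "r ^ (p^(a-1)) = 1" using power_dvd_eq_1[OF ri] by blast
    then show False using r by (simp add: unity_roots_def)
  qed
  then have "gcd j (p^a) = p^a" using i(2) by simp
  then show "p^a dvd j" using gcd_dvd1[of j "p^a"] by simp
next
  assume "p^a dvd j"
  then show "r ^ j = 1" using r power_dvd_eq_1[of r "p^a" j] by (simp add: unity_roots_def)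
qed

lemma mult_new_root_power_eq_1:
  assumes p: "prime p" and a: "a \<ge> 1" and pm: "coprime (p^a) m"
    and x: "x \<in> unity_roots m" and r: "r \<in> unity_roots (p^a) - unity_roots (p^(a-1))"
  shows "(x * r) ^ j = 1 \<longleftrightarrow> x ^ j = 1 \<and> p^a dvd j"
proof
  assume h: "(x * r) ^ j = 1"
  then have "((x * r) ^ j) ^ m = 1" by simp
  then have "(x ^ m) ^ j * r ^ (j * m) = 1" by (simp add: power_mult_distrib power_mult[symmetric] mult.commute)
  then have "r ^ (j * m) = 1" using x by (simp add: unity_roots_def)
  then have "p^a dvd j * m" using new_prime_power_root_power_eq_1[OF p a r] by simp
  then have d: "p^a dvd j" using pm by (simp add: coprime_dvd_mult_left_iff)
  then have "r ^ j = 1" using new_prime_power_root_power_eq_1[OF p a r] by simp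
  then show "x ^ j = 1 \<and> p^a dvd j" using h d by (simp add: power_mult_distrib)
next
  assume "x ^ j = 1 \<and> p^a dvd j"
  then show "(x * r) ^ j = 1" using new_prime_power_root_power_eq_1[OF p a r] by (simp add: power_mult_distrib)
qed

lemma same_order_mult_new_root:
  assumes p: "prime p" and a: "a \<ge> 1" and pm: "coprime (p^a) m"
    and x: "x \<in> unity_roots m" and r: "r \<in> unity_roots (p^a) - unity_roots (p^(a-1))"
    and x': "x' \<in> unity_roots m" and r': "r' \<in> unity_roots (p^a) - unity_roots (p^(a-1))"
  shows "same_order (x * r) (x' * r') \<longleftrightarrow> same_order x x'"
proof
  assume h: "same_order (x * r) (x' * r')"
  show "same_order x x'" unfolding same_order_def
  proof
    fix j
    have "(x * r) ^ (p^a * j) = 1 \<longleftrightarrow> (x' * r') ^ (p^a * j) = 1" using h by (simp add: same_order_def)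
    then have "x ^ (p^a * j) = 1 \<longleftrightarrow> x' ^ (p^a * j) = 1"
      using mult_new_root_power_eq_1[OF p a pm x r] mult_new_root_power_eq_1[OF p a pm x' r'] by simp
    moreover have "y ^ (p^a * j) = 1 \<longleftrightarrow> y ^ j = 1" if "y \<in> unity_roots m" for y
      using power_coprime_power_eq_1_iff[OF pm that] by (simp add: power_mult)
    ultimately show "x ^ j = 1 \<longleftrightarrow> x' ^ j = 1" using x x' by simp
  qed
next
  assume "same_order x x'"
  then show "same_order (x * r) (x' * r')"
    unfolding same_order_def using mult_new_root_power_eq_1[OF p a pm x r] mult_new_root_power_eq_1[OF p a pm x' r'] by simp
qed

lemma mult_new_roots_bij:
  assumes p: "prime p" and a: "a \<ge> 1" and m: "m > 0" and pm: "coprime (p^a) m"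
  shows "bij_betw (\<lambda>(x,r). x*r) (unity_roots m \<times> (unity_roots (p^a) - unity_roots (p^(a-1)))) (unity_roots (p^a*m) - unity_roots (p^(a-1)*m))"
proof -
  define q k where "q = p^a" and "k = p^(a-1)"
  have p1: "p > 1" using prime_gt_1_nat[OF p] .
  have q: "q = k * p" using a unfolding q_def k_def by (cases a) auto
  have k0: "k > 0" using p1 by (simp add: k_def)
  have q0: "q > 0" using p1 by (simp add: q_def)
  have kq: "k < q" using q k0 p1 by simp
  define P where "P = unity_roots q - unity_roots k"
  have cP: "card P = q - k" unfolding P_def using k0 q0 q by (intro card_unity_roots_diff) simp_all
  have cN: "card (unity_roots (q*m) - unity_roots (k*m)) = q*m - k*m"
    using k0 q0 m q by (intro card_unity_roots_diff) simp_all
  have inj: "inj_on (\<lambda>(x,r). x*r) (unity_roots m \<times> P)"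
  proof (rule inj_onI, clarify)
    fix x r x' r' assume h: "x \<in> unity_roots m" "r \<in> P" "x' \<in> unity_roots m" "r' \<in> P" "x * r = x' * r'"
    have x'0: "x' \<noteq> 0" using unity_root_nonzero[OF h(3) m] .
    have r0: "r \<noteq> 0" using h(2) q0 by (auto simp: P_def unity_roots_def power_0_left)
    define z where "z = x / x'"
    have z1: "z = r' / r" using h(5) x'0 r0 unfolding z_def by (simp add: field_simps)
    have "z ^ m = 1" using h(1,3) x'0 by (simp add: z_def power_divide unity_roots_def)
    moreover have "z ^ q = 1" using h(2,4) r0 by (simp add: z1 power_divide unity_roots_def P_def)
    ultimately have "z ^ gcd m q = 1" by (rule power_gcd_eq_1)
    moreover have "gcd m q = 1" using pm by (simp add: q_def coprime_iff_gcd_eq_1 gcd.commute)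
    ultimately have "z = 1" by simp
    then show "x = x' \<and> r = r'" using x'0 r0 h(5) unfolding z_def by auto
  qed
  have im: "(\<lambda>(x,r). x*r) ` (unity_roots m \<times> P) \<subseteq> unity_roots (q*m) - unity_roots (k*m)"
  proof (rule image_subsetI, clarify)
    fix x r assume h: "x \<in> unity_roots m" "r \<in> P"
    have "(x * r) ^ (q*m) = (x^m)^q * (r^q)^m"
      by (simp add: power_mult_distrib power_mult[symmetric] mult.commute)
    then have A: "x * r \<in> unity_roots (q*m)" using h by (simp add: unity_roots_def P_def)
    have B: "x * r \<notin> unity_roots (k*m)"
    proof
      assume "x * r \<in> unity_roots (k*m)"
      then have "(x * r) ^ (k*m) = 1" by (simp add: unity_roots_def)
      then have "q dvd k * m" using mult_new_root_power_eq_1[OF p a pm h(1), of r "k*m"] h(2)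
        by (simp add: P_def q_def k_def)
      then have "q dvd k" using pm by (simp add: q_def coprime_dvd_mult_left_iff)
      then show False using kq k0 by (simp add: nat_dvd_not_less)
    qed
    show "x * r \<in> unity_roots (q*m) - unity_roots (k*m)" using A B by simp
  qed
  have "card ((\<lambda>(x,r). x*r) ` (unity_roots m \<times> P)) = card (unity_roots m \<times> P)" using inj by (rule card_image)
  also have "\<dots> = m * (q - k)" using card_unity_roots[OF m] cP by (simp add: card_cartesian_product)
  also have "\<dots> = card (unity_roots (q*m) - unity_roots (k*m))" using cN by (simp add: algebra_simps diff_mult_distrib)
  finally have "(\<lambda>(x,r). x*r) ` (unity_roots m \<times> P) = unity_roots (q*m) - unity_roots (k*m)"
    using im finite_unity_roots[of "q*m"] q0 m by (intro card_subset_eq) auto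
  then show ?thesis using inj unfolding bij_betw_def P_def q_def k_def by simp
qed

lemma mixed_order_pairs_split:
  assumes "n' dvd n"
  shows "mixed_order_pairs n = mixed_order_pairs n'
    \<union> unity_roots n' \<times> (unity_roots n - unity_roots n')
    \<union> (unity_roots n - unity_roots n') \<times> unity_roots n'
    \<union> {(x, y). x \<in> unity_roots n - unity_roots n' \<and> y \<in> unity_roots n - unity_roots n' \<and> \<not> same_order x y}"
proof -
  have sub: "unity_roots n' \<subseteq> unity_roots n" using assms by (rule unity_roots_dvd_mono)
  have "\<not> same_order x y" "\<not> same_order y x" if "x \<in> unity_roots n'" "y \<notin> unity_roots n'" for x y
    using that unfolding same_order_def unity_roots_def by blast+
  then show ?thesis using sub by (auto simp: mixed_order_pairs_def)
qed

lemma prod_norm_diff_swap: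
  "(\<Prod>z\<in>B \<times> A. cmod (fst z - snd z)) = (\<Prod>z\<in>A \<times> B. cmod (fst z - snd z))"
proof -
  have "(\<Prod>z\<in>B \<times> A. cmod (fst z - snd z)) = (\<Prod>y\<in>B. \<Prod>x\<in>A. cmod (y - x))"
    by (simp add: prod.cartesian_product case_prod_beta)
  also have "\<dots> = (\<Prod>x\<in>A. \<Prod>y\<in>B. cmod (x - y))"
    by (subst prod.swap) (simp add: norm_minus_commute)
  finally show ?thesis by (simp add: prod.cartesian_product case_prod_beta)
qed

lemma prod_norm_diff_old_new_unity_roots:
  assumes "n' > 0" "p > 0" "n = n' * p"
  shows "(\<Prod>z\<in>unity_roots n' \<times> (unity_roots n - unity_roots n'). cmod (fst z - snd z)) = real p ^ n'"
proof -
  have "(\<Prod>z\<in>unity_roots n' \<times> (unity_roots n - unity_roots n'). cmod (fst z - snd z)) =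
      (\<Prod>x\<in>unity_roots n'. \<Prod>y\<in>unity_roots n - unity_roots n'. cmod (x - y))"
    by (simp add: prod.cartesian_product case_prod_beta)
  also have "\<dots> = (\<Prod>x\<in>unity_roots n'. real p)"
    using prod_norm_diff_new_unity_roots[OF assms(1,2,3)] by (intro prod.cong) auto
  also have "\<dots> = real p ^ n'" using card_unity_roots[OF assms(1)] by simp
  finally show ?thesis .
qed

lemma prod_norm_new_mixed_pairs:
  assumes p: "prime p" and a: "a \<ge> 1" and m: "m > 0" and pm: "\<not> p dvd m"
  defines "N \<equiv> unity_roots (p^a * m) - unity_roots (p^(a-1) * m)"
  shows "(\<Prod>z\<in>{(x, y). x \<in> N \<and> y \<in> N \<and> \<not> same_order x y}. cmod (fst z - snd z)) =
    mixed_order_prod m ^ (p^a - p^(a-1))"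
proof -
  define q k where "q = p^a" and "k = p^(a-1)"
  define P where "P = unity_roots q - unity_roots k"
  define S where "S = {(x, y). x \<in> N \<and> y \<in> N \<and> \<not> same_order x y}"
  define T where "T = {(u, v) \<in> (unity_roots m \<times> P) \<times> (unity_roots m \<times> P). \<not> same_order (fst u) (fst v)}"
  let ?h = "\<lambda>(x, r). x * r"
  have p1: "p > 1" using prime_gt_1_nat[OF p] .
  have q: "q = k * p" using a unfolding q_def k_def by (cases a) auto
  have k0: "k > 0" using p1 by (simp add: k_def)
  have cop: "coprime (p^a) m" using prime_imp_coprime[OF p pm] by simp
  have copq: "coprime q m" "coprime k m" using cop unfolding q_def k_def
    by (auto simp: coprime_power_left_iff)
  have hb: "bij_betw ?h (unity_roots m \<times> P) N"
    using mult_new_roots_bij[OF p a m cop] unfolding P_def N_def q_def k_def .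
  have transfer: "same_order (x * r) (x' * r') \<longleftrightarrow> same_order x x'"
    if "x \<in> unity_roots m" "r \<in> P" "x' \<in> unity_roots m" "r' \<in> P" for x r x' r'
    using same_order_mult_new_root[OF p a cop, of x r x' r'] that unfolding P_def q_def k_def by simp
  have "map_prod ?h ?h ` T = S"
  proof
    show "map_prod ?h ?h ` T \<subseteq> S"
      using hb transfer by (force simp: T_def S_def bij_betw_def)
    show "S \<subseteq> map_prod ?h ?h ` T"
    proof clarify
      fix u v assume "(u, v) \<in> S"
      then obtain x r x' r' where xr: "x \<in> unity_roots m" "r \<in> P" "x' \<in> unity_roots m" "r' \<in> P"
        "u = x * r" "v = x' * r'" "\<not> same_order u v"
        using hb unfolding S_def bij_betw_def by (auto simp: image_iff)
      then have "((x, r), (x', r')) \<in> T" using transfer by (simp add: T_def)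
      then show "(u, v) \<in> map_prod ?h ?h ` T" using xr by (force intro: image_eqI)
    qed
  qed
  then have hT: "bij_betw (map_prod ?h ?h) T S"
    by (intro bij_betw_subset[OF bij_betw_map_prod[OF hb hb]]) (auto simp: T_def)
  have shuffle: "bij_betw (\<lambda>((x, r), (x', r')). ((x, x'), (r, r'))) T (mixed_order_pairs m \<times> (P \<times> P))"
    by (rule bij_betwI[where g = "\<lambda>((x, x'), (r, r')). ((x, r), (x', r'))"])
       (auto simp: T_def mixed_order_pairs_def)
  have "(\<Prod>z\<in>S. cmod (fst z - snd z)) = (\<Prod>((x, r), (x', r'))\<in>T. cmod (x * r - x' * r'))"
    using prod.reindex_bij_betw[OF hT, of "\<lambda>z. cmod (fst z - snd z)"] by (simp add: case_prod_beta)
  also have "\<dots> = (\<Prod>y\<in>mixed_order_pairs m. \<Prod>r\<in>P. \<Prod>r'\<in>P. cmod (fst y * r - snd y * r'))"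
    using prod.reindex_bij_betw[OF shuffle, of "\<lambda>((x, x'), (r, r')). cmod (x * r - x' * r')", symmetric]
    by (simp add: prod.cartesian_product case_prod_beta)
  finally have S_eq: "(\<Prod>z\<in>S. cmod (fst z - snd z)) =
      (\<Prod>y\<in>mixed_order_pairs m. \<Prod>r\<in>P. \<Prod>r'\<in>P. cmod (fst y * r - snd y * r'))" .
  have "(\<Prod>z\<in>S. cmod (fst z - snd z)) * mixed_order_prod m ^ k =
      (\<Prod>y\<in>mixed_order_pairs m. (\<Prod>r\<in>P. \<Prod>r'\<in>P. cmod (fst y * r - snd y * r')) * cmod (fst y ^ q - snd y ^ q) ^ k)"
    unfolding S_eq mixed_order_prod_power[OF m copq(1), symmetric] by (simp add: prod.distrib prod_power_distrib)
  also have "\<dots> = (\<Prod>y\<in>mixed_order_pairs m. cmod (fst y ^ q - snd y ^ q) ^ (q - k) * cmod (fst y ^ k - snd y ^ k) ^ k)"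
    unfolding P_def by (intro prod.cong refl prod_norm_new_root_pairs[OF k0 _ q]) (use p1 in simp)
  also have "\<dots> = (\<Prod>y\<in>mixed_order_pairs m. cmod (fst y ^ q - snd y ^ q)) ^ (q - k) *
      (\<Prod>y\<in>mixed_order_pairs m. cmod (fst y ^ k - snd y ^ k)) ^ k"
    by (simp add: prod.distrib prod_power_distrib)
  also have "\<dots> = mixed_order_prod m ^ (q - k) * mixed_order_prod m ^ k"
    by (simp add: mixed_order_prod_power[OF m copq(1)] mixed_order_prod_power[OF m copq(2)])
  finally show ?thesis using mixed_order_prod_pos[of m] unfolding S_def q_def k_def by simp
qed

lemma mixed_order_prod_step:
  assumes p: "prime p" and a: "a \<ge> 1" and m: "m > 0" and pm: "\<not> p dvd m"
  shows "mixed_order_prod (p^a * m) =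
    mixed_order_prod (p^(a-1) * m) * real p ^ (2 * (p^(a-1) * m)) * mixed_order_prod m ^ (p^a - p^(a-1))"
proof -
  define n n' where "n = p^a * m" and "n' = p^(a-1) * m"
  define N where "N = unity_roots n - unity_roots n'"
  define S where "S = {(x, y). x \<in> N \<and> y \<in> N \<and> \<not> same_order x y}"
  define f where "f = (\<lambda>z::complex \<times> complex. cmod (fst z - snd z))"
  have p0: "p > 0" using prime_gt_0_nat[OF p] .
  have n0: "n > 0" "n' > 0" using p0 m by (simp_all add: n_def n'_def)
  have nn: "n = n' * p" using a unfolding n_def n'_def by (cases a) auto
  have fin: "finite (unity_roots n)" "finite N" "finite (mixed_order_pairs n')"
    using finite_unity_roots[OF n0(1)] finite_mixed_order_pairs[OF n0(2)] by (simp_all add: N_def)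
  have "finite S" by (rule finite_subset[of _ "N \<times> N"]) (auto simp: S_def fin)
  moreover have split: "mixed_order_pairs n = mixed_order_pairs n' \<union> unity_roots n' \<times> N \<union> N \<times> unity_roots n' \<union> S"
    unfolding N_def S_def by (rule mixed_order_pairs_split) (simp add: nn)
  ultimately have "mixed_order_prod n = prod f (mixed_order_pairs n') * prod f (unity_roots n' \<times> N) * prod f (N \<times> unity_roots n') * prod f S"
    unfolding mixed_order_prod_def f_def[symmetric] split
    using fin finite_unity_roots[OF n0(2)]
    by (subst prod.union_disjoint, fastforce, fastforce, force simp: S_def N_def mixed_order_pairs_def)+
       (simp add: mult.assoc)
  also have "prod f (N \<times> unity_roots n') = prod f (unity_roots n' \<times> N)"
    unfolding f_def by (rule prod_norm_diff_swap)
  also have "prod f (unity_roots n' \<times> N) = real p ^ n'"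
    unfolding f_def N_def using n0(2) p0 nn by (rule prod_norm_diff_old_new_unity_roots)
  also have "prod f S = mixed_order_prod m ^ (p^a - p^(a-1))"
    unfolding f_def S_def N_def n_def n'_def using prod_norm_new_mixed_pairs[OF p a m pm] by simp
  finally show ?thesis unfolding f_def mixed_order_prod_def[symmetric] n_def n'_def by (simp add: power_add[symmetric] mult_2)
qed

section \<open>Solving the recursion\<close>

definition det_exponent :: "nat \<Rightarrow> nat \<Rightarrow> nat" where
  "det_exponent r x = (x div r ^ multiplicity r x) * (\<Sum>j<multiplicity r x. r ^ j)"

definition det_value :: "nat \<Rightarrow> nat" where
  "det_value x = (\<Prod>r\<in>prime_factors x. r ^ det_exponent r x)"

lemma det_value_superset:
  assumes x: "x > 0" and S: "finite S" "prime_factors x \<subseteq> S" "\<forall>r\<in>S. prime r"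
  shows "det_value x = (\<Prod>r\<in>S. r ^ det_exponent r x)"
  unfolding det_value_def
proof (rule prod.mono_neutral_left[OF S(1) S(2)])
  show "\<forall>i\<in>S - prime_factors x. i ^ det_exponent i x = 1"
  proof
    fix r assume r: "r \<in> S - prime_factors x"
    then have "\<not> r dvd x" using S(3) x by (auto simp: in_prime_factors_iff)
    then have "multiplicity r x = 0" by (rule not_dvd_imp_multiplicity_0)
    then show "r ^ det_exponent r x = 1" by (simp add: det_exponent_def)
  qed
qed

lemma multiplicity_prime_power_other:
  fixes r p m :: nat
  assumes "prime r" "prime p" "r \<noteq> p"
  shows "multiplicity r (p ^ j * m) = multiplicity r m"
  using assms by (intro multiplicity_prime_elem_times_other) (auto dest: prime_dvd_power primes_dvd_imp_eq)

lemma multiplicity_prime_power_same: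
  fixes p m :: nat
  assumes "prime p" "\<not> p dvd m" "m > 0"
  shows "multiplicity p (p ^ j * m) = j"
  using assms prime_elem_multiplicity_mult_distrib[of p "p^j" m]
  by (simp add: not_dvd_imp_multiplicity_0 prime_gt_0_nat)

lemma det_exponent_step:
  fixes p a m r :: nat
  assumes p: "prime p" and a: "a \<ge> 1" and m: "m > 0" and pm: "\<not> p dvd m" and r: "prime r"
  shows "det_exponent r (p^a * m) = det_exponent r (p^(a-1) * m) + (p^a - p^(a-1)) * det_exponent r m
           + (if r = p then p^(a-1) * m else 0)"
proof (cases "r = p")
  case True
  have "multiplicity p m = 0" using pm by (rule not_dvd_imp_multiplicity_0)
  then have e0: "det_exponent p m = 0" by (simp add: det_exponent_def)
  have "det_exponent p (p^a * m) = m * (\<Sum>j<a. p^j)"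
    using multiplicity_prime_power_same[OF p pm m, of a] p by (simp add: det_exponent_def)
  moreover have "det_exponent p (p^(a-1) * m) = m * (\<Sum>j<a-1. p^j)"
    using multiplicity_prime_power_same[OF p pm m, of "a-1"] p by (simp add: det_exponent_def)
  moreover have "(\<Sum>j<a. p^j) = (\<Sum>j<a-1. p^j) + p^(a-1)"
    using a by (cases a) auto
  ultimately show ?thesis using True e0 by (simp add: algebra_simps)
next
  case False
  define b where "b = multiplicity r m"
  have mb: "multiplicity r (p^a * m) = b" "multiplicity r (p^(a-1) * m) = b"
    using multiplicity_prime_power_other[OF r p False] by (simp_all add: b_def)
  obtain t where t: "m = r ^ b * t" using multiplicity_dvd[of r m] unfolding b_def by (auto elim: dvdE)
  have r0: "r ^ b > 0" using r by (simp add: prime_gt_0_nat)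
  have "p^a * m = r^b * (p^a * t)" "p^(a-1) * m = r^b * (p^(a-1) * t)" using t by (simp_all add: mult_ac)
  then have d1: "p^a * m div r^b = p^a * t" and d2: "p^(a-1) * m div r^b = p^(a-1) * t"
    using r0 by (metis nonzero_mult_div_cancel_left not_gr0)+
  have d3: "m div r^b = t" using t r0 by simp
  have le: "p^(a-1) \<le> p^a" using prime_gt_1_nat[OF p] by (intro power_increasing) auto
  obtain d where dd: "p^a = p^(a-1) + d" using le le_iff_add by blast
  define S where "S = (\<Sum>j<b. r ^ j)"
  have "det_exponent r (p^a * m) = p^a * t * S" by (simp add: det_exponent_def mb d1 S_def)
  moreover have "det_exponent r (p^(a-1) * m) = p^(a-1) * t * S" unfolding det_exponent_def mb d2 S_def ..
  moreover have "det_exponent r m = t * S" by (simp add: det_exponent_def b_def[symmetric] d3 S_def)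
  moreover have "p^a - p^(a-1) = d" using dd by simp
  ultimately show ?thesis using False dd by (simp add: algebra_simps)
qed

lemma mixed_order_prod_1: "mixed_order_prod 1 = 1"
proof -
  have "unity_roots 1 = {1}" by (auto simp: unity_roots_def)
  then have "mixed_order_pairs 1 = {}" by (auto simp: mixed_order_pairs_def same_order_def)
  then show ?thesis by (simp add: mixed_order_prod_def)
qed

lemma det_value_step:
  fixes p a m :: nat
  assumes p: "prime p" and a: "a \<ge> 1" and m: "m > 0" and pm: "\<not> p dvd m"
  shows "det_value (p^a * m) = det_value (p^(a-1) * m) * p ^ (p^(a-1) * m) * det_value m ^ (p^a - p^(a-1))"
proof -
  define n n' c where "n = p^a * m" and "n' = p^(a-1) * m" and "c = p^a - p^(a-1)"
  have p0: "p > 0" using prime_gt_0_nat[OF p] .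
  have n0: "n > 0" "n' > 0" using p0 m by (simp_all add: n_def n'_def)
  define S where "S = prime_factors n"
  have fS: "finite S" "\<forall>r\<in>S. prime r" by (auto simp: S_def)
  have dn': "n' dvd n" using a unfolding n_def n'_def by (intro mult_dvd_mono le_imp_power_dvd) auto
  have dm: "m dvd n" by (simp add: n_def)
  have sub: "prime_factors n' \<subseteq> S" "prime_factors m \<subseteq> S"
    using dn' dm n0 m by (auto simp: S_def in_prime_factors_iff intro: dvd_trans)
  have pS: "p \<in> S" using p a n0 by (auto simp: S_def in_prime_factors_iff n_def intro!: dvd_mult2)
  have "det_value n = (\<Prod>r\<in>S. r ^ det_exponent r n)" unfolding det_value_def S_def ..
  also have "\<dots> = (\<Prod>r\<in>S. r ^ det_exponent r n' * (r ^ det_exponent r m) ^ c * (if r = p then r ^ n' else 1))"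
  proof (rule prod.cong[OF refl])
    fix r assume r: "r \<in> S"
    have "det_exponent r n = det_exponent r n' + c * det_exponent r m + (if r = p then n' else 0)"
      using det_exponent_step[OF p a m pm, of r] fS r unfolding n_def n'_def c_def by simp
    then show "r ^ det_exponent r n = r ^ det_exponent r n' * (r ^ det_exponent r m) ^ c * (if r = p then r ^ n' else 1)"
      by (simp add: power_add power_mult[symmetric] mult.commute)
  qed
  also have "\<dots> = (\<Prod>r\<in>S. r ^ det_exponent r n') * (\<Prod>r\<in>S. r ^ det_exponent r m) ^ c * (\<Prod>r\<in>S. if r = p then r ^ n' else 1)"
    by (simp add: prod.distrib prod_power_distrib)
  also have "(\<Prod>r\<in>S. if r = p then r ^ n' else 1) = p ^ n'"
    using fS(1) pS by (simp add: prod.delta)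
  also have "(\<Prod>r\<in>S. r ^ det_exponent r n') = det_value n'" using det_value_superset[OF n0(2) fS(1) sub(1) fS(2)] by simp
  also have "(\<Prod>r\<in>S. r ^ det_exponent r m) = det_value m" using det_value_superset[OF m fS(1) sub(2) fS(2)] by simp
  finally show ?thesis unfolding n_def n'_def c_def by (simp add: mult_ac)
qed

lemma mixed_order_prod_eq_det_value_sq: "n > 0 \<Longrightarrow> mixed_order_prod n = real (det_value n) ^ 2"
proof (induction n rule: less_induct)
  case (less n)
  show ?case
  proof (cases "n = 1")
    case True then show ?thesis using mixed_order_prod_1 by (simp add: det_value_def)
  next
    case False
    obtain p where p: "prime p" "p dvd n" using prime_factor_nat[OF False] by blast
    define a where "a = multiplicity p n"
    define m where "m = n div p ^ a"
    have p1: "p > 1" using prime_gt_1_nat[OF p(1)] .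
    have a: "a \<ge> 1" using p less.prems prime_multiplicity_gt_zero_iff[of p n] by (simp add: a_def)
    have nm: "n = p^a * m" using multiplicity_dvd[of p n] by (simp add: a_def m_def)
    have pm: "\<not> p dvd m" unfolding m_def a_def by (rule multiplicity_decompose) (use less.prems p in auto)
    have m: "m > 0" using nm less.prems by (cases m) auto
    have pa: "p^a > 1" using p1 a by (intro one_less_power) auto
    have mlt: "m < n" using nm pa m by simp
    have "p^(a-1) < p^a" using p1 a by (intro power_strict_increasing) auto
    then have n'lt: "p^(a-1) * m < n" using nm m by simp
    have "mixed_order_prod n = mixed_order_prod (p^(a-1) * m) * real p ^ (2 * (p^(a-1) * m)) * mixed_order_prod m ^ (p^a - p^(a-1))"
      using mixed_order_prod_step[OF p(1) a m pm] nm by simp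
    also have "\<dots> = real (det_value (p^(a-1) * m)) ^ 2 * real p ^ (2 * (p^(a-1) * m)) * (real (det_value m) ^ 2) ^ (p^a - p^(a-1))"
      using less.IH[OF n'lt] less.IH[OF mlt] m p1 by simp
    also have "\<dots> = real (det_value (p^(a-1) * m) * p ^ (p^(a-1) * m) * det_value m ^ (p^a - p^(a-1))) ^ 2"
      by (simp add: power_mult_distrib power_mult[symmetric] mult.commute)
    also have "\<dots> = real (det_value n) ^ 2" using det_value_step[OF p(1) a m pm] nm by simp
    finally show ?thesis .
  qed
qed

section \<open>Vandermonde determinants\<close>

definition vandermonde :: "nat \<Rightarrow> (nat \<Rightarrow> 'a::idom) \<Rightarrow> 'a mat" where
  "vandermonde n x = mat n n (\<lambda>(i,j). x i ^ j)"

definition vandermonde_prod :: "nat \<Rightarrow> (nat \<Rightarrow> 'a::idom) \<Rightarrow> 'a" where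
  "vandermonde_prod n x = (\<Prod>i<n. \<Prod>j<i. x i - x j)"

lemma vandermonde_prod_Suc: "vandermonde_prod (Suc n) x = (\<Prod>i<n. x (Suc i) - x 0) * vandermonde_prod n (\<lambda>i. x (Suc i))"
proof -
  have "vandermonde_prod (Suc n) x = (\<Prod>i<n. \<Prod>j<Suc i. x (Suc i) - x j)"
    unfolding vandermonde_prod_def by (subst prod.lessThan_Suc_shift) simp
  also have "\<dots> = (\<Prod>i<n. (x (Suc i) - x 0) * (\<Prod>j<i. x (Suc i) - x (Suc j)))"
    by (subst prod.lessThan_Suc_shift) simp
  also have "\<dots> = (\<Prod>i<n. x (Suc i) - x 0) * vandermonde_prod n (\<lambda>i. x (Suc i))"
    unfolding vandermonde_prod_def by (simp add: prod.distrib)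
  finally show ?thesis .
qed

lemma det_diagonal_mat:
  fixes d :: "nat \<Rightarrow> 'a::comm_ring_1"
  shows "det (mat n n (\<lambda>(i,j). if i = j then d i else 0)) = (\<Prod>i<n. d i)"
proof -
  have "upper_triangular (mat n n (\<lambda>(i,j). if i = j then d i else 0))"
    unfolding upper_triangular_def by auto
  then have "det (mat n n (\<lambda>(i,j). if i = j then d i else 0)) =
      prod_list (diag_mat (mat n n (\<lambda>(i,j). if i = j then d i else 0)))"
    by (rule det_upper_triangular) auto
  also have "\<dots> = (\<Prod>i<n. d i)" by (simp add: prod_list_diag_prod atLeast0LessThan)
  finally show ?thesis .
qed

lemma row_scaled_vandermonde:
  "mat n n (\<lambda>(i,j). x i ^ j * c i) = mat n n (\<lambda>(i,j). if i = j then c i else 0) * vandermonde n x"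
proof (rule eq_matI)
  fix i j assume "i < dim_row (mat n n (\<lambda>(i,j). if i = j then c i else 0) * vandermonde n x)"
    "j < dim_col (mat n n (\<lambda>(i,j). if i = j then c i else 0) * vandermonde n x)"
  then have i: "i < n" and j: "j < n" by (simp_all add: vandermonde_def)
  have "(mat n n (\<lambda>(i,j). if i = j then c i else 0) * vandermonde n x) $$ (i,j) =
      (\<Sum>k\<in>{0..<n}. (if i = k then c i else 0) * x k ^ j)"
    using i j by (simp add: vandermonde_def scalar_prod_def)
  also have "\<dots> = (\<Sum>k\<in>{0..<n}. if k = i then c i * x i ^ j else 0)"
    by (intro sum.cong) auto
  finally show "mat n n (\<lambda>(i,j). x i ^ j * c i) $$ (i,j) =
      (mat n n (\<lambda>(i,j). if i = j then c i else 0) * vandermonde n x) $$ (i,j)"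
    using i j by (simp add: mult.commute)
qed (simp_all add: vandermonde_def)

lemma vandermonde_Suc_column_reduction:
  "vandermonde (Suc n) x * mat (Suc n) (Suc n) (\<lambda>(i,j). if i = j then 1 else if j = Suc i then - x 0 else 0) =
   four_block_mat (1\<^sub>m 1) (0\<^sub>m 1 n) (mat n 1 (\<lambda>_. 1)) (mat n n (\<lambda>(i,j). x (Suc i) ^ j * (x (Suc i) - x 0)))"
  (is "vandermonde (Suc n) x * ?E = ?C")
proof (rule eq_matI)
  fix i j assume "i < dim_row ?C" "j < dim_col ?C"
  then have i: "i < Suc n" and j: "j < Suc n" by simp_all
  have "(vandermonde (Suc n) x * ?E) $$ (i,j) = (\<Sum>k<Suc n. x i ^ k * ?E $$ (k, j))"
    using i j by (simp add: vandermonde_def scalar_prod_def atLeast0LessThan)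
  also have "\<dots> = (\<Sum>k<Suc n. (if k = j then x i ^ k else 0) + (if j = Suc k then - x 0 * x i ^ k else 0))"
    using j by (intro sum.cong refl) auto
  also have "\<dots> = x i ^ j + (if j = 0 then 0 else - x 0 * x i ^ (j - 1))"
    using j by (cases j) (auto simp: sum.distrib)
  also have "\<dots> = ?C $$ (i,j)"
    using i j by (cases i; cases j) (auto simp: algebra_simps)
  finally show "(vandermonde (Suc n) x * ?E) $$ (i,j) = ?C $$ (i,j)" .
qed (simp_all add: vandermonde_def)

lemma det_vandermonde: "det (vandermonde n x) = vandermonde_prod n x"
proof (induction n arbitrary: x)
  case 0
  then show ?case by (simp add: vandermonde_def vandermonde_prod_def)
next
  case (Suc n)
  define E where "E = mat (Suc n) (Suc n) (\<lambda>(i,j). if i = j then 1 else if j = Suc i then - x 0 else 0)"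
  have E: "E \<in> carrier_mat (Suc n) (Suc n)" by (simp add: E_def)
  have "upper_triangular E" unfolding upper_triangular_def E_def by auto
  then have "det E = prod_list (diag_mat E)" using E by (rule det_upper_triangular)
  also have "\<dots> = 1" by (simp add: prod_list_diag_prod E_def)
  finally have "det E = 1" .
  moreover have "vandermonde (Suc n) x \<in> carrier_mat (Suc n) (Suc n)"
    by (simp add: vandermonde_def)
  ultimately have "det (vandermonde (Suc n) x) = det (vandermonde (Suc n) x * E)"
    using E by (simp add: det_mult)
  also have "\<dots> = det (1\<^sub>m 1) * det (mat n n (\<lambda>(i,j). x (Suc i) ^ j * (x (Suc i) - x 0)))"
    unfolding E_def vandermonde_Suc_column_reduction by (rule det_four_block_mat_upper_right_zero) auto
  also have "mat n n (\<lambda>(i,j). x (Suc i) ^ j * (x (Suc i) - x 0)) =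
      mat n n (\<lambda>(i,j). if i = j then x (Suc i) - x 0 else 0) * vandermonde n (\<lambda>i. x (Suc i))"
    by (rule row_scaled_vandermonde)
  also have "det \<dots> = (\<Prod>i<n. x (Suc i) - x 0) * det (vandermonde n (\<lambda>i. x (Suc i)))"
    by (subst det_mult) (auto simp: vandermonde_def det_diagonal_mat)
  finally show ?case by (simp add: Suc.IH vandermonde_prod_Suc)
qed

section \<open>Primitive roots of unity indexed by row labels\<close>

definition prim_root :: "nat \<Rightarrow> complex" where "prim_root d = cis (2 * pi / real d)"

lemma prim_root_power: "prim_root d ^ k = cis (2 * pi * real k / real d)"
  by (simp add: prim_root_def DeMoivre algebra_simps)

lemma prim_root_power_self: "d > 0 \<Longrightarrow> prim_root d ^ d = 1"
  by (simp add: prim_root_power)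

lemma prim_root_power_mod: "d > 0 \<Longrightarrow> prim_root d ^ k = prim_root d ^ (k mod d)"
proof -
  assume d: "d > 0"
  have "prim_root d ^ k = prim_root d ^ (d * (k div d) + k mod d)" by simp
  also have "\<dots> = (prim_root d ^ d) ^ (k div d) * prim_root d ^ (k mod d)" by (simp only: power_add power_mult)
  finally show ?thesis using prim_root_power_self[OF d] by simp
qed

lemma prim_root_power_inj: "d > 0 \<Longrightarrow> a < d \<Longrightarrow> b < d \<Longrightarrow> prim_root d ^ a = prim_root d ^ b \<Longrightarrow> a = b"
proof -
  assume d: "d > 0" and ab: "a < d" "b < d" and e: "prim_root d ^ a = prim_root d ^ b"
  have "inj_on (\<lambda>k. cis (2 * pi * real k / real d)) {..<d}"
    using bij_betw_roots_unity[OF d] by (simp add: bij_betw_def)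
  then show "a = b" using e ab by (auto simp: prim_root_power dest: inj_onD)
qed

lemma prim_root_power_eq_iff: "d > 0 \<Longrightarrow> prim_root d ^ a = prim_root d ^ b \<longleftrightarrow> a mod d = b mod d"
proof -
  assume d: "d > 0"
  show ?thesis
  proof
    assume "prim_root d ^ a = prim_root d ^ b"
    then have "prim_root d ^ (a mod d) = prim_root d ^ (b mod d)" using prim_root_power_mod[OF d, of a] prim_root_power_mod[OF d, of b] by simp
    then show "a mod d = b mod d" using prim_root_power_inj[OF d] d by simp
  next
    assume "a mod d = b mod d"
    then show "prim_root d ^ a = prim_root d ^ b" using prim_root_power_mod[OF d, of a] prim_root_power_mod[OF d, of b] by simp
  qed
qed

lemma prim_root_power_eq_1_iff: "d > 0 \<Longrightarrow> prim_root d ^ a = 1 \<longleftrightarrow> d dvd a"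
  using prim_root_power_eq_iff[of d a 0] by (simp add: dvd_eq_mod_eq_0)

lemma prim_root_power_order: "d > 0 \<Longrightarrow> coprime j d \<Longrightarrow> (prim_root d ^ j) ^ e = 1 \<longleftrightarrow> d dvd e"
  by (simp add: power_mult[symmetric] prim_root_power_eq_1_iff coprime_dvd_mult_right_iff coprime_commute)

definition totative_list :: "nat \<Rightarrow> nat list" where
  "totative_list d = sorted_list_of_set (totatives d)"

text \<open>The row label (d, k) of A_n stands for the primitive d-th root of unity exp(2 pi i j / d),
  where j is the k-th smallest totative of d, counting from k = 0.\<close>
definition label_root :: "nat \<times> nat \<Rightarrow> complex" where
  "label_root x = prim_root (fst x) ^ (totative_list (fst x) ! snd x)"

lemma totative_list_props:
  "set (totative_list d) = totatives d" "distinct (totative_list d)" "length (totative_list d) = totient d"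
  by (simp_all add: totative_list_def totient_def)

lemma totative_list_nth: "i < totient d \<Longrightarrow> totative_list d ! i \<in> totatives d"
  using totative_list_props nth_mem by metis

lemma label_root_power_eq_1_iff: "d > 0 \<Longrightarrow> i < totient d \<Longrightarrow> label_root (d, i) ^ e = 1 \<longleftrightarrow> d dvd e"
  using totative_list_nth[of i d] by (simp add: label_root_def prim_root_power_order in_totatives_iff)

lemma totatives_mod_inj: "j \<in> totatives d \<Longrightarrow> j' \<in> totatives d \<Longrightarrow> j mod d = j' mod d \<Longrightarrow> j = j'"
proof -
  assume j: "j \<in> totatives d" and j': "j' \<in> totatives d" and e: "j mod d = j' mod d"
  have jj: "1 \<le> j" "j \<le> d" "1 \<le> j'" "j' \<le> d" using j j' by (auto simp: in_totatives_iff)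
  have m: "x mod d = (if x = d then 0 else x)" if "1 \<le> x" "x \<le> d" for x
    using that by auto
  show "j = j'" using e m[OF jj(1,2)] m[OF jj(3,4)] jj by (auto split: if_splits)
qed

lemma label_root_inj:
  assumes "d > 0" "d' > 0" "i < totient d" "i' < totient d'" "label_root (d, i) = label_root (d', i')"
  shows "d = d' \<and> i = i'"
proof -
  have de: "d dvd e \<longleftrightarrow> d' dvd e" for e
    using label_root_power_eq_1_iff[OF assms(1,3), of e] label_root_power_eq_1_iff[OF assms(2,4), of e] assms(5) by simp
  have "d dvd d'" "d' dvd d" using de[of d'] de[of d] by simp_all
  then have dd: "d = d'" by (rule dvd_antisym)
  then have "prim_root d ^ (totative_list d ! i) = prim_root d ^ (totative_list d ! i')"
    using assms(5) by (simp add: label_root_def)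
  then have "totative_list d ! i mod d = totative_list d ! i' mod d" using prim_root_power_eq_iff[OF assms(1)] by simp
  then have "totative_list d ! i = totative_list d ! i'" using totatives_mod_inj totative_list_nth assms(3,4) dd by blast
  then have "i = i'" using totative_list_props(2,3)[of d] assms(3,4) dd nth_eq_iff_index_eq by metis
  then show ?thesis using dd by simp
qed

lemma cyclotomic_complex_prod_label_roots:
  assumes "d > 0"
  shows "cyclotomic_complex d = (\<Prod>i<totient d. [:- label_root (d, i), 1:])"
proof -
  have "{j \<in> {1..d}. coprime j d} = totatives d" by (auto simp: in_totatives_iff)
  then have "cyclotomic_complex d = (\<Prod>j\<in>totatives d. [:- (prim_root d ^ j), 1:])"
    unfolding cyclotomic_complex_def by (simp add: prim_root_power)
  also have "\<dots> = (\<Prod>i<totient d. [:- (prim_root d ^ (totative_list d ! i)), 1:])"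
    by (rule prod.reindex_bij_betw[symmetric, of "(!) (totative_list d)"], rule bij_betw_nth)
       (use totative_list_props in auto)
  finally show ?thesis by (simp add: label_root_def)
qed

definition block_labels :: "(nat \<Rightarrow> nat) \<Rightarrow> nat list \<Rightarrow> (nat \<times> nat) list" where
  "block_labels k ds = concat (map (\<lambda>d. map (\<lambda>i. (d, i)) [0..<k d]) ds)"

lemma row_labels_block_labels: "row_labels n = block_labels totient (sorted_list_of_set {d. d dvd n})"
  by (simp add: row_labels_def block_labels_def)

lemma set_block_labels: "set (block_labels k ds) = {(d,i). d \<in> set ds \<and> i < k d}"
  by (auto simp: block_labels_def)

lemma distinct_block_labels: "distinct ds \<Longrightarrow> distinct (block_labels k ds)"
  unfolding block_labels_def by (induction ds) (auto simp: distinct_map inj_on_def)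

lemma length_block_labels: "distinct ds \<Longrightarrow> length (block_labels k ds) = (\<Sum>d\<in>set ds. k d)"
  unfolding block_labels_def by (induction ds) auto

lemma set_row_labels: "n > 0 \<Longrightarrow> set (row_labels n) = {(d,i). d dvd n \<and> i < totient d}"
  by (simp add: row_labels_block_labels set_block_labels)

lemma distinct_row_labels: "n > 0 \<Longrightarrow> distinct (row_labels n)"
  by (simp add: row_labels_block_labels distinct_block_labels)

lemma length_row_labels: "n > 0 \<Longrightarrow> length (row_labels n) = n"
  by (simp add: row_labels_block_labels length_block_labels totient_divisor_sum)

lemma row_label_props: "n > 0 \<Longrightarrow> x \<in> set (row_labels n) \<Longrightarrow> fst x > 0 \<and> fst x dvd n \<and> snd x < totient (fst x)"
proof -
  assume n: "n > 0" and x: "x \<in> set (row_labels n)"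
  obtain d i where xd: "x = (d, i)" by (cases x)
  have h: "d dvd n" "i < totient d" using x set_row_labels[OF n] xd by auto
  then show ?thesis using dvd_pos_nat[OF n] xd by simp
qed

lemma inj_on_label_root: "n > 0 \<Longrightarrow> inj_on label_root (set (row_labels n))"
proof -
  assume n: "n > 0"
  show ?thesis
  proof (rule inj_onI)
    fix x y assume x: "x \<in> set (row_labels n)" and y: "y \<in> set (row_labels n)" and e: "label_root x = label_root y"
    obtain d i d' i' where xy: "x = (d, i)" "y = (d', i')" by (cases x, cases y) auto
    show "x = y" using label_root_inj[of d d' i i'] row_label_props[OF n x] row_label_props[OF n y] e xy by simp
  qed
qed

lemma label_root_in_unity_roots: "n > 0 \<Longrightarrow> x \<in> set (row_labels n) \<Longrightarrow> label_root x \<in> unity_roots n"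
  using row_label_props[of n x] label_root_power_eq_1_iff[of "fst x" "snd x" n] by (simp add: unity_roots_def)

lemma label_root_image: "n > 0 \<Longrightarrow> label_root ` set (row_labels n) = unity_roots n"
proof -
  assume n: "n > 0"
  have "card (label_root ` set (row_labels n)) = card (set (row_labels n))"
    using inj_on_label_root[OF n] by (rule card_image)
  also have "\<dots> = n" using distinct_row_labels[OF n] length_row_labels[OF n] by (simp add: distinct_card)
  finally have c: "card (label_root ` set (row_labels n)) = card (unity_roots n)" using card_unity_roots[OF n] by simp
  show ?thesis using label_root_in_unity_roots[OF n] c finite_unity_roots[OF n] by (intro card_subset_eq) auto
qed

section \<open>Cyclotomic polynomials\<close>

lemma pseudo_mod_monic:
  fixes f g :: "int poly"
  assumes g: "lead_coeff g = 1"
  shows "\<exists>q. f = g * q + pseudo_mod f g" "pseudo_mod f g = 0 \<or> degree (pseudo_mod f g) < degree g"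
proof -
  have g0: "g \<noteq> 0" using g by auto
  obtain q r where qr: "pseudo_divmod f g = (q, r)" by (metis surj_pair)
  have r: "pseudo_mod f g = r" using qr by (simp add: pseudo_mod_def)
  have "Polynomial.smult (coeff g (degree g) ^ (Suc (degree f) - degree g)) f = g * q + r"
    using pseudo_divmod(1)[OF g0 qr] .
  then have "f = g * q + r" using g by simp
  then show "\<exists>q. f = g * q + pseudo_mod f g" using r by (intro exI[of _ q]) simp
  show "pseudo_mod f g = 0 \<or> degree (pseudo_mod f g) < degree g" using pseudo_divmod(2)[OF g0 qr] r by simp
qed

lemma monom_minus_1_prod_cyclotomic_complex:
  assumes n: "n > 0"
  shows "monom 1 n - 1 = (\<Prod>d\<in>{d. d dvd n}. cyclotomic_complex d)"
proof -
  have f: "finite {d. d dvd n}" using n by simp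
  have "monom 1 n - 1 = (\<Prod>\<zeta>\<in>unity_roots n. [:-\<zeta>,1:])" using prod_unity_roots_linear_factors[OF n] by simp
  also have "\<dots> = (\<Prod>\<zeta>\<in>label_root ` set (row_labels n). [:-\<zeta>,1:])" using label_root_image[OF n] by simp
  also have "\<dots> = (\<Prod>x\<in>set (row_labels n). [:- label_root x,1:])"
    using inj_on_label_root[OF n] by (simp add: prod.reindex)
  also have "set (row_labels n) = Sigma {d. d dvd n} (\<lambda>d. {..<totient d})"
    using set_row_labels[OF n] by auto
  also have "(\<Prod>x\<in>Sigma {d. d dvd n} (\<lambda>d. {..<totient d}). [:- label_root x,1:]) =
      (\<Prod>d\<in>{d. d dvd n}. \<Prod>i<totient d. [:- label_root (d,i),1:])"
    using f by (subst prod.Sigma) auto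
  also have "\<dots> = (\<Prod>d\<in>{d. d dvd n}. cyclotomic_complex d)"
  proof (rule prod.cong[OF refl])
    fix d assume "d \<in> {d. d dvd n}"
    then have "d > 0" using n by (auto intro!: Nat.gr0I)
    then show "(\<Prod>i<totient d. [:- label_root (d,i),1:]) = cyclotomic_complex d" by (simp add: cyclotomic_complex_prod_label_roots)
  qed
  finally show ?thesis .
qed

lemma cyclotomic_complex_monic:
  assumes "d > 0" shows "lead_coeff (cyclotomic_complex d) = 1" "degree (cyclotomic_complex d) = totient d"
proof -
  show "lead_coeff (cyclotomic_complex d) = 1" using assms by (simp add: cyclotomic_complex_prod_label_roots lead_coeff_prod)
  have "degree (\<Prod>i<totient d. [:- label_root (d,i),(1::complex):]) = (\<Sum>i<totient d. degree [:- label_root (d,i),(1::complex):])"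
    by (rule degree_prod_eq_sum_degree) auto
  then show "degree (cyclotomic_complex d) = totient d" using assms by (simp add: cyclotomic_complex_prod_label_roots)
qed

lemma map_poly_of_int_quotient:
  fixes f Q :: "int poly" and c :: "complex poly"
  assumes Q: "lead_coeff Q = 1" and f: "map_poly of_int f = c * map_poly of_int Q"
  shows "\<exists>s. c = map_poly of_int s"
proof -
  define r where "r = pseudo_mod f Q"
  obtain s where s: "f = Q * s + r" using pseudo_mod_monic(1)[OF Q] unfolding r_def by blast
  have rdeg: "r = 0 \<or> degree r < degree Q" using pseudo_mod_monic(2)[OF Q] unfolding r_def .
  have "c * map_poly of_int Q = map_poly of_int Q * map_poly of_int s + (map_poly of_int r :: complex poly)"
    using f s by (simp add: of_int_poly_hom.hom_add of_int_poly_hom.hom_mult)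
  then have eq: "map_poly of_int Q * (c - map_poly of_int s) = (map_poly of_int r :: complex poly)"
    by (simp add: algebra_simps)
  have Q0: "map_poly (of_int :: int \<Rightarrow> complex) Q \<noteq> 0" using Q by auto
  have "c = map_poly of_int s"
  proof (rule ccontr)
    assume ne: "c \<noteq> map_poly of_int s"
    then have "map_poly of_int r \<noteq> (0 :: complex poly)" using eq Q0 by auto
    then have r0: "r \<noteq> 0" by auto
    have "degree (map_poly (of_int :: int \<Rightarrow> complex) r) = degree (map_poly of_int Q * (c - map_poly of_int s))"
      using eq by simp
    also have "\<dots> = degree Q + degree (c - map_poly of_int s)"
      using Q0 ne by (subst degree_mult_eq) auto
    finally have "degree r \<ge> degree Q" by simp
    then show False using rdeg r0 by simp
  qed
  then show ?thesis ..
qed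

lemma map_poly_cyclotomic: "d > 0 \<Longrightarrow> map_poly of_int (cyclotomic d) = cyclotomic_complex d"
proof (induction d rule: less_induct)
  case (less d)
  define E where "E = {e. e dvd d \<and> e \<noteq> d}"
  have Epos: "e \<in> E \<Longrightarrow> e > 0 \<and> e < d" for e
    using less.prems by (auto simp: E_def intro!: Nat.gr0I dest: dvd_imp_le)
  define Q where "Q = (\<Prod>e\<in>E. cyclotomic e)"
  have Qc: "map_poly of_int Q = (\<Prod>e\<in>E. cyclotomic_complex e)"
    unfolding Q_def of_int_poly_hom.hom_prod using less.IH Epos by (intro prod.cong) auto
  have "lead_coeff (map_poly (of_int :: int \<Rightarrow> complex) Q) = 1"
    unfolding Qc lead_coeff_prod using cyclotomic_complex_monic Epos by simp
  then have lQ: "lead_coeff Q = 1" by simp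
  have "{e. e dvd d} = insert d E" "finite E" using less.prems by (auto simp: E_def)
  then have "map_poly of_int (monom 1 d - 1) = cyclotomic_complex d * map_poly of_int Q"
    using monom_minus_1_prod_cyclotomic_complex[OF less.prems]
    by (simp add: Qc E_def of_int_poly_hom.hom_minus)
  then have "\<exists>s. cyclotomic_complex d = map_poly of_int s" by (rule map_poly_of_int_quotient[OF lQ])
  then have "\<exists>!p. map_poly (of_int :: int \<Rightarrow> complex) p = cyclotomic_complex d"
    by (metis of_int_poly_hom.eq_iff)
  then show ?case unfolding cyclotomic_def by (rule theI')
qed

lemma cyclotomic_monic: "d > 0 \<Longrightarrow> lead_coeff (cyclotomic d) = 1 \<and> degree (cyclotomic d) = totient d"
proof -
  assume d: "d > 0"
  have "lead_coeff (map_poly (of_int :: int \<Rightarrow> complex) (cyclotomic d)) = 1"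
       "degree (map_poly (of_int :: int \<Rightarrow> complex) (cyclotomic d)) = totient d"
    using cyclotomic_complex_monic[OF d] map_poly_cyclotomic[OF d] by simp_all
  then show ?thesis by simp
qed

lemma poly_eq_sum_coeffs:
  fixes p :: "complex poly"
  assumes "p = 0 \<or> degree p < N"
  shows "poly p x = (\<Sum>i<N. coeff p i * x ^ i)"
proof (cases "p = 0")
  case True then show ?thesis by simp
next
  case False
  then have dN: "degree p < N" using assms by simp
  have "poly p x = (\<Sum>i\<le>degree p. coeff p i * x ^ i)" by (rule poly_altdef)
  also have "\<dots> = (\<Sum>i<N. coeff p i * x ^ i)"
    using dN by (intro sum.mono_neutral_left) (auto simp: coeff_eq_0)
  finally show ?thesis .
qed

lemma poly_pseudo_mod_monic_root:
  fixes f g :: "int poly" and z :: complex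
  assumes g: "lead_coeff g = 1" and z: "poly (map_poly of_int g) z = 0"
  shows "poly (map_poly of_int (pseudo_mod f g)) z = poly (map_poly of_int f) z"
proof -
  obtain q where "f = g * q + pseudo_mod f g" using pseudo_mod_monic(1)[OF g] by blast
  then have "poly (map_poly of_int f) z =
      poly (map_poly of_int g) z * poly (map_poly of_int q) z + poly (map_poly of_int (pseudo_mod f g)) z"
    by (metis of_int_poly_hom.hom_add of_int_poly_hom.hom_mult poly_add poly_mult)
  then show ?thesis using z by simp
qed

lemma pseudo_mod_cyclotomic_eval:
  assumes d: "d > 0" and i: "i < totient d"
  shows "(\<Sum>k<totient d. label_root (d,i) ^ k * of_int (coeff (pseudo_mod (monom 1 j) (cyclotomic d)) k)) =
    label_root (d,i) ^ j"
proof -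
  define r where "r = pseudo_mod (monom 1 j) (cyclotomic d)"
  have mon: "lead_coeff (cyclotomic d) = 1" "degree (cyclotomic d) = totient d"
    using cyclotomic_monic[OF d] by auto
  have "poly (map_poly of_int (cyclotomic d)) (label_root (d,i)) = 0"
    using i by (simp add: map_poly_cyclotomic[OF d] cyclotomic_complex_prod_label_roots[OF d] poly_prod) blast
  then have "poly (map_poly of_int r) (label_root (d,i)) = label_root (d,i) ^ j"
    unfolding r_def by (simp add: poly_pseudo_mod_monic_root[OF mon(1)] poly_monom)
  moreover have "map_poly (of_int :: int \<Rightarrow> complex) r = 0 \<or> degree (map_poly (of_int :: int \<Rightarrow> complex) r) < totient d"
    using pseudo_mod_monic(2)[OF mon(1)] mon(2) unfolding r_def by auto
  then have "poly (map_poly of_int r) (label_root (d,i)) =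
      (\<Sum>k<totient d. coeff (map_poly (of_int :: int \<Rightarrow> complex) r) k * label_root (d,i) ^ k)"
    by (rule poly_eq_sum_coeffs)
  ultimately show ?thesis unfolding r_def by (simp add: mult.commute)
qed

section \<open>Factorisation of A_n through Vandermonde matrices\<close>

definition block_diag_mat :: "(nat \<Rightarrow> nat) \<Rightarrow> nat list \<Rightarrow> (nat \<times> nat \<Rightarrow> nat \<Rightarrow> complex) \<Rightarrow> complex mat" where
  "block_diag_mat k ds h = mat (length (block_labels k ds)) (length (block_labels k ds))
     (\<lambda>(r,s). if fst (block_labels k ds ! r) = fst (block_labels k ds ! s) then h (block_labels k ds ! r) (snd (block_labels k ds ! s)) else 0)"

lemma block_diag_mat_Cons:
  assumes d: "d \<notin> set ds"
  shows "block_diag_mat k (d # ds) h =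
    four_block_mat (mat (k d) (k d) (\<lambda>(i,j). h (d,i) j)) (0\<^sub>m (k d) (length (block_labels k ds)))
      (0\<^sub>m (length (block_labels k ds)) (k d)) (block_diag_mat k ds h)"
    (is "_ = four_block_mat ?M0 (0\<^sub>m ?a ?N) (0\<^sub>m ?N ?a) ?B")
proof -
  define L' where "L' = block_labels k ds"
  have L: "block_labels k (d # ds) = map (\<lambda>i. (d, i)) [0..<?a] @ L'" by (simp add: block_labels_def L'_def)
  have len: "length (block_labels k (d # ds)) = ?a + ?N" by (simp add: L L'_def)
  have lo: "r < ?a \<Longrightarrow> block_labels k (d # ds) ! r = (d, r)" for r by (simp add: L nth_append)
  have hi: "r \<ge> ?a \<Longrightarrow> block_labels k (d # ds) ! r = L' ! (r - ?a)" for r by (simp add: L nth_append)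
  have fstL': "fst (L' ! t) \<noteq> d" if "t < ?N" for t
  proof -
    have "L' ! t \<in> set L'" using that by (simp add: L'_def)
    then show ?thesis using d by (auto simp: L'_def set_block_labels)
  qed
  show ?thesis
  proof (rule eq_matI)
    fix r s assume "r < dim_row (four_block_mat ?M0 (0\<^sub>m ?a ?N) (0\<^sub>m ?N ?a) ?B)"
      "s < dim_col (four_block_mat ?M0 (0\<^sub>m ?a ?N) (0\<^sub>m ?N ?a) ?B)"
    then have r: "r < ?a + ?N" and s: "s < ?a + ?N" by (simp_all add: block_diag_mat_def)
    show "block_diag_mat k (d # ds) h $$ (r, s) = four_block_mat ?M0 (0\<^sub>m ?a ?N) (0\<^sub>m ?N ?a) ?B $$ (r, s)"
      using r s fstL'[of "r - ?a"] fstL'[of "s - ?a"]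
      by (cases "r < ?a"; cases "s < ?a"; force simp: block_diag_mat_def len lo hi L'_def)
  qed (simp_all add: block_diag_mat_def len)
qed

lemma det_block_diag_mat:
  "distinct ds \<Longrightarrow> det (block_diag_mat k ds h) = (\<Prod>d\<leftarrow>ds. det (mat (k d) (k d) (\<lambda>(i,j). h (d,i) j)))"
proof (induction ds)
  case Nil
  then show ?case by (simp add: block_diag_mat_def block_labels_def)
next
  case (Cons d ds)
  then have "det (block_diag_mat k (d # ds) h) = det (mat (k d) (k d) (\<lambda>(i,j). h (d,i) j)) * det (block_diag_mat k ds h)"
    unfolding block_diag_mat_Cons[OF Cons.prems[THEN distinct.simps(2)[THEN iffD1], THEN conjunct1]]
    by (intro det_four_block_mat_lower_left_zero) (auto simp: block_diag_mat_def)
  then show ?case using Cons by simp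
qed

lemma row_labels_of_divisor:
  "n > 0 \<Longrightarrow> d dvd n \<Longrightarrow> {x \<in> set (row_labels n). fst x = d} = Pair d ` {..<totient d}"
  by (auto simp: set_row_labels)

lemma block_vandermonde_mult_A_mat:
  assumes n: "n > 0"
  shows "block_diag_mat totient (sorted_list_of_set {d. d dvd n}) (\<lambda>x j. label_root x ^ j) * map_mat of_int (A_mat n)
         = vandermonde n (\<lambda>r. label_root (row_labels n ! r))"
    (is "?B * ?A = ?W")
proof -
  define L where "L = row_labels n"
  have lenL: "length L = n" using length_row_labels[OF n] by (simp add: L_def)
  have distL: "distinct L" using distinct_row_labels[OF n] by (simp add: L_def)
  have Bdef: "?B = mat n n (\<lambda>(r,s). if fst (L ! r) = fst (L ! s) then label_root (L ! r) ^ snd (L ! s) else 0)"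
    unfolding block_diag_mat_def row_labels_block_labels[symmetric] L_def[symmetric] lenL ..
  show ?thesis
  proof (rule eq_matI)
    show "dim_row (?B * ?A) = dim_row ?W" "dim_col (?B * ?A) = dim_col ?W"
      by (simp_all add: Bdef A_mat_def vandermonde_def)
    fix r j assume "r < dim_row ?W" "j < dim_col ?W"
    then have r: "r < n" and j: "j < n" by (simp_all add: vandermonde_def)
    obtain d i0 where Lr: "L ! r = (d, i0)" by (cases "L ! r")
    have Lrmem: "L ! r \<in> set L" using r lenL by simp
    have d: "d > 0" "d dvd n" "i0 < totient d" using row_label_props[OF n, of "L ! r"] Lrmem Lr by (simp_all add: L_def)
    define c where "c = (\<lambda>x. of_int (coeff (pseudo_mod (monom 1 j) (cyclotomic (fst x))) (snd x)) :: complex)"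
    define g where "g = (\<lambda>x. (if d = fst x then label_root (d, i0) ^ snd x else 0) * c x)"
    have "(?B * ?A) $$ (r, j) = (\<Sum>s\<in>{0..<n}. ?B $$ (r, s) * ?A $$ (s, j))"
      using r j by (simp add: Bdef A_mat_def scalar_prod_def)
    also have "\<dots> = (\<Sum>s<n. g (L ! s))"
      using r j by (intro sum.cong) (auto simp: Bdef A_mat_def L_def[symmetric] Lr g_def c_def split: prod.splits)
    also have "\<dots> = (\<Sum>x\<in>set L. g x)"
      using bij_betw_nth[OF distL refl refl] lenL by (simp add: sum.reindex_bij_betw)
    also have "\<dots> = (\<Sum>x\<in>{x\<in>set L. fst x = d}. label_root (d, i0) ^ snd x * c x)"
    proof -
      have "(\<Sum>x\<in>set L. g x) = (\<Sum>x\<in>set L. if fst x = d then label_root (d, i0) ^ snd x * c x else 0)"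
        by (intro sum.cong) (auto simp: g_def)
      then show ?thesis by (simp add: sum.inter_filter)
    qed
    also have "{x\<in>set L. fst x = d} = Pair d ` {..<totient d}"
      unfolding L_def using n d(2) by (rule row_labels_of_divisor)
    also have "(\<Sum>x\<in>Pair d ` {..<totient d}. label_root (d, i0) ^ snd x * c x) = (\<Sum>i<totient d. label_root (d, i0) ^ i * c (d, i))"
      by (subst sum.reindex) (auto simp: inj_on_def)
    also have "\<dots> = label_root (d, i0) ^ j" unfolding c_def using pseudo_mod_cyclotomic_eval[OF d(1) d(3)] by simp
    also have "\<dots> = ?W $$ (r, j)" using r j by (simp add: vandermonde_def L_def[symmetric] Lr)
    finally show "(?B * ?A) $$ (r, j) = ?W $$ (r, j)" .
  qed
qed

lemma det_A_mat_identity: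
  assumes n: "n > 0"
  shows "(\<Prod>d\<in>{d. d dvd n}. vandermonde_prod (totient d) (\<lambda>i. label_root (d, i))) * of_int (det (A_mat n)) = vandermonde_prod n (\<lambda>r. label_root (row_labels n ! r))"
proof -
  define ds where "ds = sorted_list_of_set {d. d dvd n}"
  have fin: "finite {d. d dvd n}" using n by simp
  have dds: "distinct ds" "set ds = {d. d dvd n}" using fin by (simp_all add: ds_def)
  define B where "B = block_diag_mat totient ds (\<lambda>x j. label_root x ^ j)"
  have lenB: "length (block_labels totient ds) = n" using length_row_labels[OF n] by (simp add: row_labels_block_labels ds_def)
  have Bc: "B \<in> carrier_mat n n" by (simp add: B_def block_diag_mat_def lenB)
  have Ac: "map_mat (of_int :: int \<Rightarrow> complex) (A_mat n) \<in> carrier_mat n n" by (simp add: A_mat_def)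
  have "det B = (\<Prod>d\<leftarrow>ds. det (mat (totient d) (totient d) (\<lambda>(i,j). label_root (d,i) ^ j)))"
    unfolding B_def by (rule det_block_diag_mat[OF dds(1)])
  also have "\<dots> = (\<Prod>d\<leftarrow>ds. vandermonde_prod (totient d) (\<lambda>i. label_root (d, i)))"
    by (simp add: det_vandermonde[unfolded vandermonde_def])
  also have "\<dots> = (\<Prod>d\<in>{d. d dvd n}. vandermonde_prod (totient d) (\<lambda>i. label_root (d, i)))"
    using prod.distinct_set_conv_list[OF dds(1), of "\<lambda>d. vandermonde_prod (totient d) (\<lambda>i. label_root (d, i))"] dds(2) by simp
  finally have dB: "det B = (\<Prod>d\<in>{d. d dvd n}. vandermonde_prod (totient d) (\<lambda>i. label_root (d, i)))" .
  have "det (B * map_mat of_int (A_mat n)) = det B * det (map_mat (of_int :: int \<Rightarrow> complex) (A_mat n))"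
    by (rule det_mult[OF Bc Ac])
  moreover have "B * map_mat of_int (A_mat n) = vandermonde n (\<lambda>r. label_root (row_labels n ! r))"
    unfolding B_def ds_def by (rule block_vandermonde_mult_A_mat[OF n])
  ultimately have "det (vandermonde n (\<lambda>r. label_root (row_labels n ! r))) = (\<Prod>d\<in>{d. d dvd n}. vandermonde_prod (totient d) (\<lambda>i. label_root (d, i))) * of_int (det (A_mat n))"
    using dB by (simp add: of_int_hom.hom_det)
  then show ?thesis by (simp add: det_vandermonde)
qed

section \<open>The absolute value of det A_n\<close>

definition offdiag_pairs :: "nat \<Rightarrow> (nat \<times> nat) set" where "offdiag_pairs m = {(i,j). i < m \<and> j < m \<and> i \<noteq> j}"
definition distinct_pairs :: "complex set \<Rightarrow> (complex \<times> complex) set" where "distinct_pairs S = {(a,b). a \<in> S \<and> b \<in> S \<and> a \<noteq> b}"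

lemma norm_vandermonde_prod_sq:
  "cmod (vandermonde_prod m x) ^ 2 = (\<Prod>p\<in>offdiag_pairs m. cmod (x (fst p) - x (snd p)))"
proof -
  define LT where "LT = Sigma {..<m} (\<lambda>i. {..<i})"
  define UT where "UT = (\<lambda>(i,j). (j,i)) ` LT"
  have fLT: "finite LT" by (simp add: LT_def)
  have "cmod (vandermonde_prod m x) = (\<Prod>i<m. \<Prod>j<i. cmod (x i - x j))"
    by (simp add: vandermonde_prod_def prod_norm[symmetric])
  also have "\<dots> = (\<Prod>p\<in>LT. cmod (x (fst p) - x (snd p)))"
    unfolding LT_def by (subst prod.Sigma) (auto simp: case_prod_beta)
  finally have e1: "cmod (vandermonde_prod m x) = (\<Prod>p\<in>LT. cmod (x (fst p) - x (snd p)))" .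
  have "(\<Prod>p\<in>UT. cmod (x (fst p) - x (snd p))) = (\<Prod>p\<in>LT. cmod (x (snd p) - x (fst p)))"
    unfolding UT_def by (subst prod.reindex) (auto simp: inj_on_def case_prod_beta)
  also have "\<dots> = (\<Prod>p\<in>LT. cmod (x (fst p) - x (snd p)))" by (simp add: norm_minus_commute)
  finally have e2: "(\<Prod>p\<in>UT. cmod (x (fst p) - x (snd p))) = (\<Prod>p\<in>LT. cmod (x (fst p) - x (snd p)))" .
  have offdiag_pairs: "offdiag_pairs m = LT \<union> UT"
  proof
    show "offdiag_pairs m \<subseteq> LT \<union> UT"
    proof
      fix p assume p: "p \<in> offdiag_pairs m"
      obtain i j where ij: "p = (i, j)" by (cases p)
      show "p \<in> LT \<union> UT"
      proof (cases "j < i")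
        case True then show ?thesis using p ij by (auto simp: offdiag_pairs_def LT_def)
      next
        case False
        then have "(j, i) \<in> LT" using p ij by (auto simp: offdiag_pairs_def LT_def)
        then show ?thesis unfolding UT_def ij by (auto intro: image_eqI[where x = "(j,i)"])
      qed
    qed
    show "LT \<union> UT \<subseteq> offdiag_pairs m" by (auto simp: offdiag_pairs_def LT_def UT_def)
  qed
  have disj: "LT \<inter> UT = {}" by (auto simp: LT_def UT_def)
  have fUT: "finite UT" using fLT by (simp add: UT_def)
  have "(\<Prod>p\<in>offdiag_pairs m. cmod (x (fst p) - x (snd p))) =
      (\<Prod>p\<in>LT. cmod (x (fst p) - x (snd p))) * (\<Prod>p\<in>UT. cmod (x (fst p) - x (snd p)))"
    unfolding offdiag_pairs using fLT fUT disj by (rule prod.union_disjoint)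
  then show ?thesis using e1 e2 by (simp add: power2_eq_square)
qed

lemma prod_offdiag_pairs_reindex:
  assumes inj: "inj_on x {..<m}"
  shows "(\<Prod>p\<in>offdiag_pairs m. cmod (x (fst p) - x (snd p))) = (\<Prod>q\<in>distinct_pairs (x ` {..<m}). cmod (fst q - snd q))"
proof -
  have b: "bij_betw (map_prod x x) (offdiag_pairs m) (distinct_pairs (x ` {..<m}))"
    unfolding bij_betw_def
  proof
    show "inj_on (map_prod x x) (offdiag_pairs m)"
      using inj unfolding inj_on_def offdiag_pairs_def by auto
    show "map_prod x x ` offdiag_pairs m = distinct_pairs (x ` {..<m})"
    proof
      show "map_prod x x ` offdiag_pairs m \<subseteq> distinct_pairs (x ` {..<m})"
        using inj unfolding offdiag_pairs_def distinct_pairs_def inj_on_def by auto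
      show "distinct_pairs (x ` {..<m}) \<subseteq> map_prod x x ` offdiag_pairs m"
      proof
        fix q assume q: "q \<in> distinct_pairs (x ` {..<m})"
        then obtain i j where ij: "i < m" "j < m" "q = (x i, x j)" "x i \<noteq> x j" unfolding distinct_pairs_def by auto
        then have "(i, j) \<in> offdiag_pairs m" by (auto simp: offdiag_pairs_def)
        then show "q \<in> map_prod x x ` offdiag_pairs m" using ij by (auto intro: image_eqI[where x = "(i,j)"])
      qed
    qed
  qed
  show ?thesis using prod.reindex_bij_betw[OF b, of "\<lambda>q. cmod (fst q - snd q)"] by simp
qed

definition label_roots_of :: "nat \<Rightarrow> complex set" where "label_roots_of d = (\<lambda>i. label_root (d, i)) ` {..<totient d}"

lemma prod_distinct_pairs_pos: "(\<Prod>q\<in>distinct_pairs S. cmod (fst q - snd q)) > 0"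
  by (rule prod_pos) (auto simp: distinct_pairs_def)

lemma same_order_label_roots_of_iff:
  assumes "d > 0" "d' > 0" "a \<in> label_roots_of d" "b \<in> label_roots_of d'"
  shows "same_order a b \<longleftrightarrow> d = d'"
proof -
  have "same_order a b \<longleftrightarrow> (\<forall>e. d dvd e \<longleftrightarrow> d' dvd e)"
    using assms by (auto simp: label_roots_of_def same_order_def label_root_power_eq_1_iff)
  also have "\<dots> \<longleftrightarrow> d = d'" by (metis dvd_antisym dvd_refl)
  finally show ?thesis .
qed

lemma unity_roots_Union_label_roots_of:
  assumes n: "n > 0"
  shows "unity_roots n = (\<Union>d\<in>{d. d dvd n}. label_roots_of d)"
proof (intro equalityI subsetI)
  fix z assume "z \<in> unity_roots n"
  then obtain x where x: "x \<in> set (row_labels n)" "z = label_root x"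
    using label_root_image[OF n] by blast
  obtain d i where "x = (d, i)" by (rule prod.exhaust)
  with x have "d dvd n" "i < totient d" "z = label_root (d, i)"
    unfolding set_row_labels[OF n] by simp_all
  then show "z \<in> (\<Union>d\<in>{d. d dvd n}. label_roots_of d)" by (auto simp: label_roots_of_def)
next
  fix z assume "z \<in> (\<Union>d\<in>{d. d dvd n}. label_roots_of d)"
  then obtain d i where "d dvd n" "i < totient d" "z = label_root (d, i)"
    by (auto simp: label_roots_of_def)
  then show "z \<in> unity_roots n"
    using label_root_in_unity_roots[OF n, of "(d, i)"] by (simp add: set_row_labels[OF n])
qed

lemma distinct_pairs_unity_roots_split:
  assumes n: "n > 0"
  shows "distinct_pairs (unity_roots n) = mixed_order_pairs n \<union> (\<Union>d\<in>{d. d dvd n}. distinct_pairs (label_roots_of d))"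
proof (intro equalityI subsetI)
  fix q assume "q \<in> distinct_pairs (unity_roots n)"
  then obtain a b d d' where ab: "q = (a, b)" "a \<noteq> b" "d dvd n" "d' dvd n"
    "a \<in> label_roots_of d" "b \<in> label_roots_of d'"
    unfolding distinct_pairs_def unity_roots_Union_label_roots_of[OF n] by auto
  show "q \<in> mixed_order_pairs n \<union> (\<Union>d\<in>{d. d dvd n}. distinct_pairs (label_roots_of d))"
  proof (cases "same_order a b")
    case True
    then have "d = d'" using same_order_label_roots_of_iff[of d d' a b] dvd_pos_nat[OF n] ab by auto
    then show ?thesis using ab by (auto simp: distinct_pairs_def)
  next
    case False
    then show ?thesis using ab unfolding mixed_order_pairs_def unity_roots_Union_label_roots_of[OF n] by auto
  qed
next
  fix q assume "q \<in> mixed_order_pairs n \<union> (\<Union>d\<in>{d. d dvd n}. distinct_pairs (label_roots_of d))"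
  then show "q \<in> distinct_pairs (unity_roots n)"
    unfolding distinct_pairs_def mixed_order_pairs_def unity_roots_Union_label_roots_of[OF n]
    by (auto simp: same_order_def)
qed

lemma prod_distinct_pairs_unity_roots:
  assumes n: "n > 0"
  shows "(\<Prod>q\<in>distinct_pairs (unity_roots n). cmod (fst q - snd q)) =
    mixed_order_prod n * (\<Prod>d\<in>{d. d dvd n}. \<Prod>q\<in>distinct_pairs (label_roots_of d). cmod (fst q - snd q))"
proof -
  define f where "f = (\<lambda>q::complex \<times> complex. cmod (fst q - snd q))"
  have fin: "finite {d. d dvd n}" "finite (distinct_pairs (label_roots_of d))" for d
    using n by (auto intro: finite_subset[of _ "label_roots_of d \<times> label_roots_of d"]
                     simp: distinct_pairs_def label_roots_of_def)
  have same: "same_order a b" if "d dvd n" "a \<in> label_roots_of d" "b \<in> label_roots_of d" for d a b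
    using same_order_label_roots_of_iff[of d d a b] dvd_pos_nat[OF n] that by simp
  have eq: "d = d'" if "d dvd n" "d' dvd n" "a \<in> label_roots_of d" "a \<in> label_roots_of d'" for d d' a
    using same_order_label_roots_of_iff[of d d' a a] dvd_pos_nat[OF n] that by (simp add: same_order_def)
  have disj1: "mixed_order_pairs n \<inter> (\<Union>d\<in>{d. d dvd n}. distinct_pairs (label_roots_of d)) = {}"
    using same by (auto simp: mixed_order_pairs_def distinct_pairs_def)
  have disj2: "distinct_pairs (label_roots_of d) \<inter> distinct_pairs (label_roots_of d') = {}"
    if "d dvd n" "d' dvd n" "d \<noteq> d'" for d d'
    using eq that by (auto simp: distinct_pairs_def)
  have "prod f (distinct_pairs (unity_roots n)) =
      prod f (mixed_order_pairs n) * prod f (\<Union>d\<in>{d. d dvd n}. distinct_pairs (label_roots_of d))"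
    unfolding distinct_pairs_unity_roots_split[OF n]
    using fin finite_mixed_order_pairs[OF n] disj1 by (intro prod.union_disjoint) auto
  also have "prod f (\<Union>d\<in>{d. d dvd n}. distinct_pairs (label_roots_of d)) =
      (\<Prod>d\<in>{d. d dvd n}. prod f (distinct_pairs (label_roots_of d)))"
    using fin disj2 by (intro prod.UNION_disjoint) auto
  finally show ?thesis by (simp add: mixed_order_prod_def f_def)
qed

lemma det_A_mat_sq:
  assumes n: "n > 0"
  shows "real_of_int (det (A_mat n)) ^ 2 = mixed_order_prod n"
proof -
  define L where "L = row_labels n"
  define z where "z = (\<lambda>r. label_root (L ! r))"
  define V where "V = (\<lambda>d. cmod (vandermonde_prod (totient d) (\<lambda>i. label_root (d, i))) ^ 2)"
  define Y where "Y = (\<Prod>d\<in>{d. d dvd n}. V d)"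
  have bL: "bij_betw ((!) L) {..<n} (set L)"
    using bij_betw_nth[OF distinct_row_labels[OF n] refl refl] length_row_labels[OF n] by (simp add: L_def)
  then have injz: "inj_on z {..<n}"
    unfolding z_def using comp_inj_on[of "(!) L" "{..<n}" label_root] inj_on_label_root[OF n]
    by (simp add: bij_betw_def comp_def L_def)
  have "z ` {..<n} = label_root ` ((!) L ` {..<n})" by (auto simp: z_def)
  then have imz: "z ` {..<n} = unity_roots n"
    using bL label_root_image[OF n] by (simp add: bij_betw_def L_def)
  have V: "V d = (\<Prod>q\<in>distinct_pairs (label_roots_of d). cmod (fst q - snd q))" if "d dvd n" for d
  proof -
    have "inj_on (\<lambda>i. label_root (d, i)) {..<totient d}"
      using label_root_inj[of d d] dvd_pos_nat[OF n] that by (auto simp: inj_on_def)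
    then show ?thesis unfolding V_def label_roots_of_def norm_vandermonde_prod_sq
      by (rule prod_offdiag_pairs_reindex)
  qed
  have "cmod ((\<Prod>d\<in>{d. d dvd n}. vandermonde_prod (totient d) (\<lambda>i. label_root (d, i))) * of_int (det (A_mat n))) ^ 2 =
      cmod (vandermonde_prod n z) ^ 2"
    using det_A_mat_identity[OF n] by (simp add: z_def L_def)
  then have "Y * real_of_int (det (A_mat n)) ^ 2 = cmod (vandermonde_prod n z) ^ 2"
    by (simp add: Y_def V_def norm_mult prod_norm[symmetric] power_mult_distrib prod_power_distrib)
  also have "\<dots> = (\<Prod>q\<in>distinct_pairs (unity_roots n). cmod (fst q - snd q))"
    by (simp only: norm_vandermonde_prod_sq prod_offdiag_pairs_reindex[OF injz] imz)
  also have "\<dots> = mixed_order_prod n * Y"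
    unfolding prod_distinct_pairs_unity_roots[OF n] Y_def using V by simp
  finally have "real_of_int (det (A_mat n)) ^ 2 * Y = mixed_order_prod n * Y" by (simp only: mult.commute)
  moreover have "Y > 0"
    unfolding Y_def using V prod_distinct_pairs_pos by (intro prod_pos) simp
  ultimately show ?thesis by simp
qed

lemma det_exponent_real:
  assumes p: "prime p" and n: "n > 0"
  shows "real (det_exponent p n) = real n * (1 - real p powr (- real (multiplicity p n))) / (real p - 1)"
proof -
  define a where "a = multiplicity p n"
  define m where "m = n div p ^ a"
  have p1: "real p > 1" using prime_gt_1_nat[OF p] by simp
  have nm: "n = p ^ a * m" using multiplicity_dvd[of p n] by (simp add: a_def m_def)
  have "real (det_exponent p n) = real m * (\<Sum>j<a. real p ^ j)" by (simp add: det_exponent_def a_def[symmetric] m_def[symmetric])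
  also have "(\<Sum>j<a. real p ^ j) = (real p ^ a - 1) / (real p - 1)" using p1 by (simp add: geometric_sum)
  finally have e1: "real (det_exponent p n) = real m * ((real p ^ a - 1) / (real p - 1))" .
  have pw: "real p powr (- real a) = inverse (real p ^ a)" using p1 by (simp add: powr_minus powr_realpow)
  have "real n * (1 - real p powr (- real a)) = real m * (real p ^ a - 1)"
    using p1 by (simp add: nm pw field_simps)
  then show ?thesis using e1 by (simp add: a_def[symmetric])
qed

theorem corollary2p9:
  fixes n :: nat
  assumes "n > 0"
  shows "real_of_int \<bar>det (A_mat n)\<bar> =
    (\<Prod>p\<in>prime_factors n.
       real p powr (real n * (1 - real p powr (- real (multiplicity p n))) / (real p - 1)))"
proof -
  have "real_of_int \<bar>det (A_mat n)\<bar> ^ 2 = real (det_value n) ^ 2"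
    using det_A_mat_sq[OF assms] mixed_order_prod_eq_det_value_sq[OF assms] by simp
  then have "real_of_int \<bar>det (A_mat n)\<bar> = real (det_value n)"
    by (rule power2_eq_imp_eq) auto
  also have "\<dots> = (\<Prod>p\<in>prime_factors n. real p powr real (det_exponent p n))"
    unfolding det_value_def of_nat_prod of_nat_power
    by (intro prod.cong refl) (simp add: powr_realpow prime_gt_0_nat in_prime_factors_iff)
  also have "\<dots> = (\<Prod>p\<in>prime_factors n.
       real p powr (real n * (1 - real p powr (- real (multiplicity p n))) / (real p - 1)))"
    using assms by (intro prod.cong refl) (simp add: det_exponent_real in_prime_factors_iff)
  finally show ?thesis .
qed

end
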